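(* Let $f:[a,b]\to\mathbb R$ be bounded, with a finite number of local maximum points, local minimum points, and discontinuity points, and with $\mathcal{ER}(f)=[\inf_{[a,b]}f,\sup_{[a,b]}f]$. Let $\{\Lambda_n=\{\lambda_{1,n},\ldots,\lambda_{d_n,n}\}\}_n$ be a sequence of finite multisets of real numbers with $d_n\to\infty$, such that $\{\Lambda_n\}_n$ has an asymptotic distribution described by $f$ and $\Lambda_n\subseteq f([a,b])$ for every $n$. Then there exist an asymptotically uniform grid $\{x_{i,n}\}_{i=1,\ldots,d_n}$ in $[a,b]$ with $\{x_{i,n}\}_{i=1,\ldots,d_n}\subset[a,b]$ and, for every $n$, a permutation $\tau_n$ of $\{1,\ldots,d_n\}$ such that $\lambda_{\tau_n(i),n}=f(x_{i,n})$ for all $i=1,\ldots,d_n$.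
   Context: A point $x_0\in[a,b]$ is a local maximum (resp. minimum) point of $f$ if $f(x_0)\ge f(x)$ (resp. $f(x_0)\le f(x)$) for all $x$ in a neighborhood of $x_0$ in $[a,b]$ (non-strict inequalities; e.g. every point is such a point if $f$ is constant). For measurable $f:[a,b]\to\mathbb R$, $\mathcal{ER}(f)=\{z\in\mathbb R:\mu_1\{x:|f(x)-z|<\epsilon\}>0\ \forall\epsilon>0\}$. A sequence of points $\{x_{i,n}\}_{i=1,\ldots,d_n}$ with $d_n\to\infty$ is an asymptotically uniform grid in $[a,b]$ if $\max_{i}|x_{i,n}-(a+i(b-a)/d_n)|\to0$. $\{\Lambda_n\}_n$ has an asymptotic distribution described by $f$ if $\lim_{n}\frac1{d_n}\sum_{i=1}^{d_n}F(\lambda_{i,n})=\frac1{b-a}\int_a^bF(f(x))\,dx$ for every continuous $F:\mathbb C\to\mathbb C$ with bounded support. *)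

theory Defs
  imports "HOL-Analysis.Analysis"
begin

definition local_max_point :: "real \<Rightarrow> real \<Rightarrow> (real \<Rightarrow> real) \<Rightarrow> real \<Rightarrow> bool" where
  "local_max_point a b f x0 \<longleftrightarrow> x0 \<in> {a..b} \<and>
     (\<exists>e>0. \<forall>x\<in>{a..b}. \<bar>x - x0\<bar> < e \<longrightarrow> f x \<le> f x0)"

definition local_min_point :: "real \<Rightarrow> real \<Rightarrow> (real \<Rightarrow> real) \<Rightarrow> real \<Rightarrow> bool" where
  "local_min_point a b f x0 \<longleftrightarrow> x0 \<in> {a..b} \<and>
     (\<exists>e>0. \<forall>x\<in>{a..b}. \<bar>x - x0\<bar> < e \<longrightarrow> f x0 \<le> f x)"

definition discontinuity_point :: "real \<Rightarrow> real \<Rightarrow> (real \<Rightarrow> real) \<Rightarrow> real \<Rightarrow> bool" where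
  "discontinuity_point a b f x0 \<longleftrightarrow> x0 \<in> {a..b} \<and> \<not> continuous (at x0 within {a..b}) f"

definition essential_range :: "real \<Rightarrow> real \<Rightarrow> (real \<Rightarrow> real) \<Rightarrow> real set" where
  "essential_range a b f = {z. \<forall>e>0. emeasure lebesgue {x\<in>{a..b}. \<bar>f x - z\<bar> < e} > 0}"

text \<open>Multisets Lambda_n given as lam i n, i = 1..d n.\<close>
definition has_asymptotic_distribution ::
  "(nat \<Rightarrow> nat) \<Rightarrow> (nat \<Rightarrow> nat \<Rightarrow> real) \<Rightarrow> real \<Rightarrow> real \<Rightarrow> (real \<Rightarrow> real) \<Rightarrow> bool" where
  "has_asymptotic_distribution d lam a b f \<longleftrightarrow>
     (\<forall>F :: complex \<Rightarrow> complex. continuous_on UNIV F \<and> bounded {z. F z \<noteq> 0} \<longrightarrow>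
        (\<lambda>n. (1 / of_nat (d n)) * (\<Sum>i=1..d n. F (complex_of_real (lam i n))))
          \<longlonglongrightarrow> (1 / complex_of_real (b - a)) * integral {a..b} (\<lambda>x. F (complex_of_real (f x))))"

definition asymptotically_uniform_grid ::
  "(nat \<Rightarrow> nat) \<Rightarrow> (nat \<Rightarrow> nat \<Rightarrow> real) \<Rightarrow> real \<Rightarrow> real \<Rightarrow> bool" where
  "asymptotically_uniform_grid d x a b \<longleftrightarrow>
     filterlim d at_top sequentially \<and>
     (\<lambda>n. Max ((\<lambda>i. \<bar>x i n - (a + real i * (b - a) / real (d n))\<bar>) ` {1..d n})) \<longlonglongrightarrow> 0"

end

theory Submission
  imports Defs
begin

(* Both the eigenvalues lam i n and the samples f (a + i (b - a) / d n) of the symbol on the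
   uniform grid are distributed as f, and the limit distribution charges every subinterval of
   [inf f, sup f] since this is the essential range of f. Hence for every rho > 0 their counting
   functions eventually differ by a shift of at most rho, and matching the two families in sorted
   order moves every value by at most rho. Off its finitely many local extrema and
   discontinuities f is continuous and strictly monotone, so, uniformly on the points at distance
   at least eta from them, every value within rho of f y is attained within eps of y. This pulls
   the matched eigenvalues back to preimages close to all grid points except the O(eta d n)
   ones near critical points; a second sorted matching, of the preimages against the grid,
   absorbs these exceptions. Letting eps tend to 0 slowly along n gives the grid. *)

section \<open>Sorted matching\<close>

text \<open>Together with its converse, \<open>shift_dominated \<delta>\<close> bounds the Levy distance of the
  two empirical distributions by \<open>\<delta>\<close>.\<close>

definition shift_dominated :: "real \<Rightarrow> ('a \<Rightarrow> real) \<Rightarrow> 'a set \<Rightarrow> ('b \<Rightarrow> real) \<Rightarrow> 'b set \<Rightarrow> bool" where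
  "shift_dominated \<delta> u A v B \<longleftrightarrow> (\<forall>t. card {i\<in>A. u i \<le> t} \<le> card {j\<in>B. v j \<le> t + \<delta>})"

lemma shift_dominated_min_le:
  assumes dom: "shift_dominated \<delta> u A v B" and "finite A" "i \<in> A"
    and j0: "\<forall>j\<in>B. v j0 \<le> v j"
  shows "v j0 \<le> u i + \<delta>"
proof -
  have "0 < card {i'\<in>A. u i' \<le> u i}"
    using assms(2,3) by (auto simp: card_gt_0_iff)
  also have "\<dots> \<le> card {j\<in>B. v j \<le> u i + \<delta>}"
    using dom by (simp add: shift_dominated_def)
  finally obtain j where "j \<in> B" "v j \<le> u i + \<delta>"
    by (auto simp: card_gt_0_iff)
  then show ?thesis using j0 by force
qed

lemma shift_dominated_remove:
  assumes dom: "shift_dominated \<delta> u A v B"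
    and i0: "i0 \<in> A" "\<forall>i\<in>A. u i0 \<le> u i" and j0: "j0 \<in> B" "v j0 \<le> u i0 + \<delta>"
  shows "shift_dominated \<delta> u (A - {i0}) v (B - {j0})"
  unfolding shift_dominated_def
proof
  fix t
  show "card {i\<in>A - {i0}. u i \<le> t} \<le> card {j\<in>B - {j0}. v j \<le> t + \<delta>}"
  proof (cases "u i0 \<le> t")
    case True
    have "{i\<in>A - {i0}. u i \<le> t} = {i\<in>A. u i \<le> t} - {i0}"
      and "{j\<in>B - {j0}. v j \<le> t + \<delta>} = {j\<in>B. v j \<le> t + \<delta>} - {j0}" by auto
    moreover have "i0 \<in> {i\<in>A. u i \<le> t}" and "j0 \<in> {j\<in>B. v j \<le> t + \<delta>}"
      using True i0 j0 by auto
    ultimately show ?thesis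
      using dom by (simp add: shift_dominated_def card_Diff_singleton diff_le_mono)
  next
    case False
    then have "{i\<in>A - {i0}. u i \<le> t} = {}" using i0 by force
    then show ?thesis by (metis card.empty zero_le)
  qed
qed

text \<open>The two minima are within \<open>\<delta>\<close> of each other; matching them and recursing is the
  sorted matching.\<close>

lemma shift_dominated_imp_close_bij:
  assumes "finite A" "finite B" "card A = card B"
    and "shift_dominated \<delta> u A v B" "shift_dominated \<delta> v B u A"
  shows "\<exists>\<sigma>. bij_betw \<sigma> B A \<and> (\<forall>j\<in>B. \<bar>u (\<sigma> j) - v j\<bar> \<le> \<delta>)"
  using assms
proof (induction "card A" arbitrary: A B)
  case 0
  then show ?case by (auto simp: bij_betw_def)
next
  case (Suc k)
  then have "A \<noteq> {}" "B \<noteq> {}" by auto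
  then obtain i0 j0 where i0: "i0 \<in> A" "\<forall>i\<in>A. u i0 \<le> u i" and j0: "j0 \<in> B" "\<forall>j\<in>B. v j0 \<le> v j"
    using ex_is_arg_min_if_finite[OF \<open>finite A\<close>, of u] ex_is_arg_min_if_finite[OF \<open>finite B\<close>, of v]
    by (auto simp: is_arg_min_linorder)
  have vu: "v j0 \<le> u i0 + \<delta>" and uv: "u i0 \<le> v j0 + \<delta>"
    using shift_dominated_min_le[OF Suc.prems(4) \<open>finite A\<close> i0(1) j0(2)]
      shift_dominated_min_le[OF Suc.prems(5) \<open>finite B\<close> j0(1) i0(2)] by auto
  have "k = card (A - {i0})" "card (A - {i0}) = card (B - {j0})"
    using Suc.hyps(2) Suc.prems(3) i0(1) j0(1) by auto
  then obtain \<sigma> where \<sigma>: "bij_betw \<sigma> (B - {j0}) (A - {i0})" "\<forall>j\<in>B - {j0}. \<bar>u (\<sigma> j) - v j\<bar> \<le> \<delta>"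
    using Suc.hyps(1)[of "A - {i0}" "B - {j0}"] Suc.prems(1,2)
      shift_dominated_remove[OF Suc.prems(4) i0 j0(1) vu] shift_dominated_remove[OF Suc.prems(5) j0 i0(1) uv]
    by auto
  have "bij_betw (\<sigma>(j0 := i0)) (B - {j0}) (A - {i0})"
    using \<sigma>(1) by (rule bij_betw_cong[THEN iffD1, rotated]) auto
  then have "bij_betw (\<sigma>(j0 := i0)) B A"
    using notIn_Un_bij_betw3[of j0 "B - {j0}" "\<sigma>(j0 := i0)" "A - {i0}"] i0(1) j0(1)
    by (simp add: insert_absorb)
  moreover have "\<forall>j\<in>B. \<bar>u ((\<sigma>(j0 := i0)) j) - v j\<bar> \<le> \<delta>"
    using \<sigma>(2) vu uv by auto
  ultimately show ?case by blast
qed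

lemma shift_dominated_imp_close_permutation:
  assumes "finite A" "shift_dominated \<delta> u A v A" "shift_dominated \<delta> v A u A"
  shows "\<exists>\<tau>. \<tau> permutes A \<and> (\<forall>j\<in>A. \<bar>u (\<tau> j) - v j\<bar> \<le> \<delta>)"
proof -
  obtain \<sigma> where \<sigma>: "bij_betw \<sigma> A A" "\<forall>j\<in>A. \<bar>u (\<sigma> j) - v j\<bar> \<le> \<delta>"
    using shift_dominated_imp_close_bij[OF assms(1,1) refl assms(2,3)] by blast
  define \<tau> where "\<tau> j = (if j \<in> A then \<sigma> j else j)" for j
  have "bij_betw \<tau> A A"
    using \<sigma>(1) by (rule bij_betw_cong[THEN iffD1, rotated]) (simp add: \<tau>_def)
  then have "\<tau> permutes A" by (rule bij_imp_permutes) (simp add: \<tau>_def)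
  then show ?thesis using \<sigma>(2) by (auto simp: \<tau>_def)
qed

lemma shift_dominatedI_interval:
  assumes "finite A" "card A \<le> card B" "\<forall>i\<in>A. a \<le> u i" "\<forall>j\<in>B. v j \<le> b"
    and "\<And>t. a \<le> t \<Longrightarrow> t + \<delta> < b \<Longrightarrow> card {i\<in>A. u i \<le> t} \<le> card {j\<in>B. v j \<le> t + \<delta>}"
  shows "shift_dominated \<delta> u A v B"
  unfolding shift_dominated_def
proof
  fix t
  consider "t < a" | "b \<le> t + \<delta>" | "a \<le> t" "t + \<delta> < b" by linarith
  then show "card {i\<in>A. u i \<le> t} \<le> card {j\<in>B. v j \<le> t + \<delta>}"
  proof cases
    case 1
    then have "{i\<in>A. u i \<le> t} = {}" using assms(3) by (auto simp: not_le)
    then show ?thesis by (simp only: card.empty le0)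
  next
    case 2
    then have "{j\<in>B. v j \<le> t + \<delta>} = B" using assms(4) by auto
    moreover have "card {i\<in>A. u i \<le> t} \<le> card A" by (rule card_mono) (use assms(1) in auto)
    ultimately show ?thesis using assms(2) by simp
  next
    case 3
    then show ?thesis by (rule assms(5))
  qed
qed

lemma shift_dominated_of_mesh:
  assumes "finite A" "finite B" "card A \<le> card B" "0 < \<delta>" "\<forall>i\<in>A. m \<le> u i" "\<forall>j\<in>B. v j \<le> M"
    and mesh: "\<And>k. k \<le> nat \<lceil>2 * (M - m) / \<delta>\<rceil> \<Longrightarrow>
      card {i\<in>A. u i \<le> m + real k * \<delta> / 2} \<le> card {j\<in>B. v j \<le> m + real k * \<delta> / 2 + \<delta> / 2}"
  shows "shift_dominated \<delta> u A v B"
proof (rule shift_dominatedI_interval[OF assms(1,3,5,6)])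
  fix t assume t: "m \<le> t" "t + \<delta> < M"
  define q where "q = (t - m) / (\<delta> / 2)"
  define k where "k = nat \<lceil>q\<rceil>"
  have "0 \<le> q" using t assms(4) by (simp add: q_def)
  then have "q \<le> real k" "real k < q + 1"
    unfolding k_def using ceiling_correct[of q] by auto
  then have s: "t \<le> m + real k * \<delta> / 2" "m + real k * \<delta> / 2 + \<delta> / 2 \<le> t + \<delta>"
    using assms(4) by (simp_all add: q_def field_simps)
  have "q \<le> 2 * (M - m) / \<delta>" using t assms(4) by (simp add: q_def field_simps)
  also have "\<dots> \<le> real (nat \<lceil>2 * (M - m) / \<delta>\<rceil>)" by (rule of_nat_ceiling)
  finally have "k \<le> nat \<lceil>2 * (M - m) / \<delta>\<rceil>" unfolding k_def by simp
  then have "card {i\<in>A. u i \<le> m + real k * \<delta> / 2} \<le> card {j\<in>B. v j \<le> m + real k * \<delta> / 2 + \<delta> / 2}"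
    by (rule mesh)
  moreover have "card {i\<in>A. u i \<le> t} \<le> card {i\<in>A. u i \<le> m + real k * \<delta> / 2}"
    by (rule card_mono) (use assms(1) s in auto)
  moreover have "card {j\<in>B. v j \<le> m + real k * \<delta> / 2 + \<delta> / 2} \<le> card {j\<in>B. v j \<le> t + \<delta>}"
    by (rule card_mono) (use assms(2) s in auto)
  ultimately show "card {i\<in>A. u i \<le> t} \<le> card {j\<in>B. v j \<le> t + \<delta>}" by linarith
qed

section \<open>Uniform grids\<close>

lemma eventually_pos_of_filterlim_at_top:
  assumes "filterlim d at_top sequentially"
  shows "\<forall>\<^sub>F n in sequentially. d n > (0::nat)"
  using filterlim_at_top[THEN iffD1, OF assms, rule_format, of 1] by (auto elim: eventually_mono)

definition grid :: "real \<Rightarrow> real \<Rightarrow> nat \<Rightarrow> nat \<Rightarrow> real" where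
  "grid a b D i = a + real i * (b - a) / real D"

lemma grid_in_Icc:
  assumes "a \<le> b" "i \<in> {1..D}"
  shows "grid a b D i \<in> {a..b}"
proof -
  have "real i * (b - a) / real D \<le> real D * (b - a) / real D"
    using assms by (intro divide_right_mono mult_right_mono) auto
  then show ?thesis using assms by (auto simp: grid_def)
qed

lemma grid_le_iff:
  assumes "a < b" "D > 0"
  shows "grid a b D i \<le> s \<longleftrightarrow> real i \<le> (s - a) * real D / (b - a)"
  using assms by (simp add: grid_def field_simps)

lemma grid_less_iff:
  assumes "a < b" "D > 0"
  shows "grid a b D i < s \<longleftrightarrow> real i < (s - a) * real D / (b - a)"
  using assms by (simp add: grid_def field_simps)

lemma le_grid_iff:
  assumes "a < b" "D > 0"
  shows "s \<le> grid a b D i \<longleftrightarrow> (s - a) * real D / (b - a) \<le> real i"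
  using assms by (simp add: grid_def field_simps)

lemma grid_diff: "grid a b D i - grid a b D j = (real i - real j) * (b - a) / real D"
  by (simp add: grid_def diff_divide_distrib left_diff_distrib)

definition grid_cell :: "real \<Rightarrow> real \<Rightarrow> nat \<Rightarrow> real \<Rightarrow> nat" where
  "grid_cell a b D x = nat \<lceil>(x - a) * real D / (b - a)\<rceil>"

lemma grid_cell_eqI:
  assumes "a < b" "D > 0" "i \<ge> 1" "x \<in> {grid a b D (i - 1)<..grid a b D i}"
  shows "grid_cell a b D x = i"
proof -
  have "real i - 1 < (x - a) * real D / (b - a)" "(x - a) * real D / (b - a) \<le> real i"
    using assms by (auto simp: grid_less_iff le_grid_iff of_nat_diff)
  then have "\<lceil>(x - a) * real D / (b - a)\<rceil> = int i" by (simp add: ceiling_eq_iff)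
  then show ?thesis by (simp add: grid_cell_def)
qed

lemma grid_cell:
  assumes "a < b" "D > 0" "x \<in> {a<..b}"
  shows "grid_cell a b D x \<in> {1..D}"
    and "x \<in> {grid a b D (grid_cell a b D x - 1)<..grid a b D (grid_cell a b D x)}"
proof -
  define q where "q = (x - a) * real D / (b - a)"
  have "0 < q" "q \<le> real D"
    using assms by (auto simp: q_def field_simps)
  then have k: "1 \<le> \<lceil>q\<rceil>" "\<lceil>q\<rceil> \<le> int D" "real (grid_cell a b D x) = of_int \<lceil>q\<rceil>"
    unfolding grid_cell_def q_def[symmetric] by (auto simp: ceiling_le_iff)
  then show "grid_cell a b D x \<in> {1..D}"
    unfolding grid_cell_def q_def[symmetric] by (simp add: le_nat_iff ceiling_le_iff)
  have "real (grid_cell a b D x - 1) < q" "q \<le> real (grid_cell a b D x)"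
    using k ceiling_correct[of q] by (auto simp: of_nat_diff)
  then show "x \<in> {grid a b D (grid_cell a b D x - 1)<..grid a b D (grid_cell a b D x)}"
    using assms by (simp add: grid_less_iff le_grid_iff q_def)
qed

lemma grid_cell_dist:
  assumes "a < b" "D > 0" "x \<in> {a<..b}"
  shows "\<bar>grid a b D (grid_cell a b D x) - x\<bar> \<le> (b - a) / real D"
proof -
  have "grid a b D (grid_cell a b D x) - grid a b D (grid_cell a b D x - 1) = (b - a) / real D"
    using grid_cell(1)[OF assms] by (simp add: grid_diff of_nat_diff)
  then show ?thesis using grid_cell(2)[OF assms] by auto
qed

lemma card_grid_le:
  assumes "a < b" "D > 0" "a \<le> s" "s \<le> b"
  shows "real (card {i\<in>{1..D}. grid a b D i \<le> s}) = of_int \<lfloor>(s - a) * real D / (b - a)\<rfloor>"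
proof -
  define q where "q = (s - a) * real D / (b - a)"
  have "0 \<le> q" "q \<le> real D" using assms by (auto simp: q_def field_simps)
  then have "grid a b D i \<le> s \<longleftrightarrow> i \<le> nat \<lfloor>q\<rfloor>" for i
    using assms by (simp add: grid_le_iff q_def[symmetric] le_nat_iff le_floor_iff)
  moreover have "nat \<lfloor>q\<rfloor> \<le> D"
    using \<open>q \<le> real D\<close> by (metis floor_mono floor_of_nat nat_int nat_mono)
  ultimately have "{i\<in>{1..D}. grid a b D i \<le> s} = {1..nat \<lfloor>q\<rfloor>}" by fastforce
  then show ?thesis using \<open>0 \<le> q\<close> by (simp add: q_def)
qed

lemma card_grid_le_gap:
  assumes "a < b" "D > 0" "a \<le> s" "s \<le> s'" "s' \<le> b"
  shows "real (card {i\<in>{1..D}. grid a b D i \<le> s}) + (s' - s) * real D / (b - a) - 1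
           \<le> real (card {i\<in>{1..D}. grid a b D i \<le> s'})"
proof -
  have "(s' - s) * real D / (b - a) = (s' - a) * real D / (b - a) - (s - a) * real D / (b - a)"
    by (simp add: diff_divide_distrib[symmetric] algebra_simps)
  then show ?thesis
    using assms card_grid_le[of a b D s] card_grid_le[of a b D s']
      of_int_floor_le[of "(s - a) * real D / (b - a)"] real_of_int_floor_gt_diff_one[of "(s' - a) * real D / (b - a)"]
    by linarith
qed

lemma card_grid_near_le:
  assumes "a < b" "D > 0" "0 \<le> \<eta>"
  shows "real (card {i\<in>{1..D}. \<bar>grid a b D i - p\<bar> < \<eta>}) \<le> 2 * \<eta> * real D / (b - a) + 1"
proof (cases "{i\<in>{1..D}. \<bar>grid a b D i - p\<bar> < \<eta>} = {}")
  case True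
  have "0 \<le> 2 * \<eta> * real D / (b - a)" using assms by simp
  then show ?thesis unfolding True by simp
next
  case False
  define S where "S = {i\<in>{1..D}. \<bar>grid a b D i - p\<bar> < \<eta>}"
  have "finite S" "S \<noteq> {}" using False by (auto simp: S_def)
  then have "Min S \<in> S" "Max S \<in> S" "S \<subseteq> {Min S..Max S}" by auto
  then have "card S \<le> card {Min S..Max S}" by (intro card_mono) auto
  then have "card S + Min S \<le> Max S + 1" using \<open>Min S \<in> S\<close> \<open>S \<subseteq> {Min S..Max S}\<close> by auto
  then have "real (card S) \<le> real (Max S) - real (Min S) + 1" by linarith
  moreover have "grid a b D (Max S) - grid a b D (Min S) < 2 * \<eta>"
    using \<open>Min S \<in> S\<close> \<open>Max S \<in> S\<close> by (auto simp: S_def abs_less_iff)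
  then have "real (Max S) - real (Min S) < 2 * \<eta> * real D / (b - a)"
    using assms by (simp add: grid_diff field_simps)
  ultimately show ?thesis unfolding S_def by linarith
qed

lemma card_grid_near_set_le:
  assumes "a < b" "D > 0" "0 \<le> \<eta>" "finite C"
  shows "real (card {i\<in>{1..D}. \<exists>p\<in>C. \<bar>grid a b D i - p\<bar> < \<eta>})
           \<le> real (card C) * (2 * \<eta> * real D / (b - a) + 1)"
proof -
  have "card {i\<in>{1..D}. \<exists>p\<in>C. \<bar>grid a b D i - p\<bar> < \<eta>}
          \<le> card (\<Union>p\<in>C. {i\<in>{1..D}. \<bar>grid a b D i - p\<bar> < \<eta>})"
    by (rule card_mono) (use assms in auto)
  also have "\<dots> \<le> (\<Sum>p\<in>C. card {i\<in>{1..D}. \<bar>grid a b D i - p\<bar> < \<eta>})"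
    by (rule card_UN_le[OF assms(4)])
  finally have "real (card {i\<in>{1..D}. \<exists>p\<in>C. \<bar>grid a b D i - p\<bar> < \<eta>})
      \<le> (\<Sum>p\<in>C. real (card {i\<in>{1..D}. \<bar>grid a b D i - p\<bar> < \<eta>}))"
    by (simp flip: of_nat_sum)
  also have "\<dots> \<le> (\<Sum>p\<in>C. 2 * \<eta> * real D / (b - a) + 1)"
    by (intro sum_mono card_grid_near_le assms)
  finally show ?thesis by simp
qed

lemma card_le_shift_add_exceptions:
  fixes u v :: "'a \<Rightarrow> real"
  assumes "finite I" "\<forall>i\<in>I - E. \<bar>u i - v i\<bar> \<le> r" "t + r \<le> t'"
  shows "card {i\<in>I. u i \<le> t} \<le> card {i\<in>I. v i \<le> t'} + card (I \<inter> E)"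
proof -
  have "{i\<in>I. u i \<le> t} \<subseteq> {i\<in>I. v i \<le> t'} \<union> (I \<inter> E)"
  proof
    fix i assume i: "i \<in> {i\<in>I. u i \<le> t}"
    show "i \<in> {i\<in>I. v i \<le> t'} \<union> (I \<inter> E)"
    proof (cases "i \<in> E")
      case False
      then have "\<bar>u i - v i\<bar> \<le> r" using assms(2) i by blast
      then show ?thesis using i assms(3) by (auto simp: abs_le_iff)
    qed (use i in simp)
  qed
  then have "card {i\<in>I. u i \<le> t} \<le> card ({i\<in>I. v i \<le> t'} \<union> (I \<inter> E))"
    by (rule card_mono[rotated]) (use assms(1) in auto)
  also have "\<dots> \<le> card {i\<in>I. v i \<le> t'} + card (I \<inter> E)"
    by (rule card_Un_le)
  finally show ?thesis .
qed

lemma shift_dominated_perturbed_grid: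
  assumes ab: "a < b" and "D > 0" "\<epsilon> > 0" and x: "\<forall>i\<in>{1..D}. x i \<in> {a..b}"
    and close: "\<forall>i\<in>{1..D} - E. \<bar>x i - grid a b D i\<bar> \<le> \<epsilon> / 2"
    and few: "real (card ({1..D} \<inter> E)) + 1 \<le> \<epsilon> / 2 * real D / (b - a)"
  shows "shift_dominated \<epsilon> x {1..D} (grid a b D) {1..D}"
proof (rule shift_dominatedI_interval[where a = a and b = b])
  show "\<forall>i\<in>{1..D}. a \<le> x i" using x by auto
  show "\<forall>i\<in>{1..D}. grid a b D i \<le> b" using grid_in_Icc ab by auto
  fix t assume t: "a \<le> t" "t + \<epsilon> < b"
  have count: "card {i\<in>{1..D}. x i \<le> t} \<le> card {i\<in>{1..D}. grid a b D i \<le> t + \<epsilon> / 2} + card ({1..D} \<inter> E)"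
    using card_le_shift_add_exceptions[OF finite_atLeastAtMost close, of t "t + \<epsilon> / 2"] by simp
  have "real (card {i\<in>{1..D}. x i \<le> t})
      \<le> real (card {i\<in>{1..D}. grid a b D i \<le> t + \<epsilon> / 2}) + real (card ({1..D} \<inter> E))"
    using of_nat_mono[OF count, where 'a = real] unfolding of_nat_add .
  moreover have "real (card {i\<in>{1..D}. grid a b D i \<le> t + \<epsilon> / 2}) + \<epsilon> / 2 * real D / (b - a) - 1
      \<le> real (card {i\<in>{1..D}. grid a b D i \<le> t + \<epsilon>})"
    using card_grid_le_gap[OF ab \<open>D > 0\<close>, of "t + \<epsilon> / 2" "t + \<epsilon>"] t \<open>\<epsilon> > 0\<close> by simp
  ultimately have "real (card {i\<in>{1..D}. x i \<le> t}) \<le> real (card {i\<in>{1..D}. grid a b D i \<le> t + \<epsilon>})"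
    using few by linarith
  then show "card {i\<in>{1..D}. x i \<le> t} \<le> card {i\<in>{1..D}. grid a b D i \<le> t + \<epsilon>}" by simp
qed simp_all

lemma shift_dominated_grid_perturbed:
  assumes ab: "a < b" and "D > 0" "\<epsilon> > 0" and x: "\<forall>i\<in>{1..D}. x i \<in> {a..b}"
    and close: "\<forall>i\<in>{1..D} - E. \<bar>x i - grid a b D i\<bar> \<le> \<epsilon> / 2"
    and few: "real (card ({1..D} \<inter> E)) + 1 \<le> \<epsilon> / 2 * real D / (b - a)"
  shows "shift_dominated \<epsilon> (grid a b D) {1..D} x {1..D}"
proof (rule shift_dominatedI_interval[where a = a and b = b])
  show "\<forall>i\<in>{1..D}. a \<le> grid a b D i" using grid_in_Icc ab by auto
  show "\<forall>i\<in>{1..D}. x i \<le> b" using x by auto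
  fix t assume t: "a \<le> t" "t + \<epsilon> < b"
  have "\<forall>i\<in>{1..D} - E. \<bar>grid a b D i - x i\<bar> \<le> \<epsilon> / 2"
    using close by (simp add: abs_minus_commute)
  then have count: "card {i\<in>{1..D}. grid a b D i \<le> t + \<epsilon> / 2} \<le> card {i\<in>{1..D}. x i \<le> t + \<epsilon>} + card ({1..D} \<inter> E)"
    using card_le_shift_add_exceptions[OF finite_atLeastAtMost, where u = "grid a b D" and v = x
        and r = "\<epsilon> / 2" and t = "t + \<epsilon> / 2" and t' = "t + \<epsilon>"]
    by simp
  have "real (card {i\<in>{1..D}. grid a b D i \<le> t + \<epsilon> / 2})
      \<le> real (card {i\<in>{1..D}. x i \<le> t + \<epsilon>}) + real (card ({1..D} \<inter> E))"
    using of_nat_mono[OF count, where 'a = real] unfolding of_nat_add .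
  moreover have "real (card {i\<in>{1..D}. grid a b D i \<le> t}) + \<epsilon> / 2 * real D / (b - a) - 1
      \<le> real (card {i\<in>{1..D}. grid a b D i \<le> t + \<epsilon> / 2})"
    using card_grid_le_gap[OF ab \<open>D > 0\<close>, of t "t + \<epsilon> / 2"] t \<open>\<epsilon> > 0\<close> by simp
  ultimately have "real (card {i\<in>{1..D}. grid a b D i \<le> t}) \<le> real (card {i\<in>{1..D}. x i \<le> t + \<epsilon>})"
    using few by linarith
  then show "card {i\<in>{1..D}. grid a b D i \<le> t} \<le> card {i\<in>{1..D}. x i \<le> t + \<epsilon>}" by simp
qed simp_all

lemma exists_permutation_close_to_grid:
  assumes "a < b" "D > 0" "\<epsilon> > 0" "\<forall>i\<in>{1..D}. x i \<in> {a..b}"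
    and "\<forall>i\<in>{1..D} - E. \<bar>x i - grid a b D i\<bar> \<le> \<epsilon> / 2"
    and "real (card ({1..D} \<inter> E)) + 1 \<le> \<epsilon> / 2 * real D / (b - a)"
  shows "\<exists>\<tau>. \<tau> permutes {1..D} \<and> (\<forall>i\<in>{1..D}. \<bar>x (\<tau> i) - grid a b D i\<bar> \<le> \<epsilon>)"
  using shift_dominated_imp_close_permutation[OF _ shift_dominated_perturbed_grid[OF assms]
      shift_dominated_grid_perturbed[OF assms]]
  by simp

text \<open>The inserted \<open>0\<close> gives the empty grid (\<open>D = 0\<close>) deviation \<open>0\<close> instead of \<open>Max {}\<close>.\<close>

definition grid_deviation :: "real \<Rightarrow> real \<Rightarrow> nat \<Rightarrow> (nat \<Rightarrow> real) \<Rightarrow> real" where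
  "grid_deviation a b D x = Max (insert 0 ((\<lambda>i. \<bar>x i - grid a b D i\<bar>) ` {1..D}))"

lemma grid_deviation_nonneg: "0 \<le> grid_deviation a b D x"
  unfolding grid_deviation_def by (rule Max_ge) auto

lemma grid_deviation_le_iff:
  "0 \<le> \<epsilon> \<Longrightarrow> grid_deviation a b D x \<le> \<epsilon> \<longleftrightarrow> (\<forall>i\<in>{1..D}. \<bar>x i - grid a b D i\<bar> \<le> \<epsilon>)"
  unfolding grid_deviation_def by (subst Max_le_iff) auto

lemma asymptotically_uniform_gridI:
  assumes d: "filterlim d at_top sequentially"
    and lim: "(\<lambda>n. grid_deviation a b (d n) (\<lambda>i. x i n)) \<longlonglongrightarrow> 0"
  shows "asymptotically_uniform_grid d x a b"
proof -
  have ev: "\<forall>\<^sub>F n in sequentially. grid_deviation a b (d n) (\<lambda>i. x i n)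
      = Max ((\<lambda>i. \<bar>x i n - (a + real i * (b - a) / real (d n))\<bar>) ` {1..d n})"
    using eventually_pos_of_filterlim_at_top[OF d]
  proof eventually_elim
    case (elim n)
    have "\<bar>x 1 n - grid a b (d n) 1\<bar> \<le> Max ((\<lambda>i. \<bar>x i n - grid a b (d n) i\<bar>) ` {1..d n})"
      using elim by (intro Max_ge) auto
    then have "0 \<le> Max ((\<lambda>i. \<bar>x i n - grid a b (d n) i\<bar>) ` {1..d n})"
      by (rule order.trans[OF abs_ge_zero])
    then show ?case
      using elim by (simp add: grid_deviation_def Max_insert grid_def)
  qed
  have "(\<lambda>n. Max ((\<lambda>i. \<bar>x i n - (a + real i * (b - a) / real (d n))\<bar>) ` {1..d n})) \<longlonglongrightarrow> 0"
    using tendsto_cong[OF ev] lim by (rule iffD1)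
  then show ?thesis unfolding asymptotically_uniform_grid_def using d by blast
qed

section \<open>Riemann sums\<close>

lemma has_integral_indicator_Ioc:
  fixes a b p q :: real
  assumes "a \<le> p" "p \<le> q" "q \<le> b"
  shows "(indicator {p<..q} has_integral (q - p)) {a..b}"
proof -
  have "((\<lambda>x. 1::real) has_integral (q - p)) {p..q}"
    using has_integral_const_real[of "1::real" p q] assms by simp
  then have "((\<lambda>x. 1::real) has_integral (q - p)) {p<..q}"
    by (rule has_integral_spike_set_eq[THEN iffD1, rotated -1])
      (auto intro: negligible_subset[of "{p}"])
  then have "((\<lambda>x. if x \<in> {p<..q} then 1::real else 0) has_integral (q - p)) {a..b}"
    using assms by (subst has_integral_restrict) auto
  moreover have "indicator {p<..q} = (\<lambda>x. if x \<in> {p<..q} then 1::real else 0)"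
    by (auto simp: indicator_def)
  ultimately show ?thesis by simp
qed

definition right_endpoint_step :: "real \<Rightarrow> real \<Rightarrow> nat \<Rightarrow> (real \<Rightarrow> real) \<Rightarrow> real \<Rightarrow> real" where
  "right_endpoint_step a b D h =
     (\<lambda>x. \<Sum>i\<in>{1..D}. h (grid a b D i) * indicator {grid a b D (i - 1)<..grid a b D i} x)"

lemma right_endpoint_step_eq:
  assumes "a < b" "D > 0" "x \<in> {a<..b}"
  shows "right_endpoint_step a b D h x = h (grid a b D (grid_cell a b D x))"
proof -
  have cell_iff: "x \<in> {grid a b D (i - 1)<..grid a b D i} \<longleftrightarrow> i = grid_cell a b D x"
    if "i \<in> {1..D}" for i
  proof
    assume x_in: "x \<in> {grid a b D (i - 1)<..grid a b D i}"
    have "i \<ge> 1" using that by simp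
    then show "i = grid_cell a b D x" using grid_cell_eqI[OF assms(1,2) _ x_in] by simp
  next
    assume "i = grid_cell a b D x"
    then show "x \<in> {grid a b D (i - 1)<..grid a b D i}" using grid_cell(2)[OF assms] by simp
  qed
  then have "right_endpoint_step a b D h x
      = (\<Sum>i\<in>{1..D}. h (grid a b D i) * of_bool (i = grid_cell a b D x))"
    unfolding right_endpoint_step_def by (intro sum.cong refl) (simp add: indicator_def)
  also have "\<dots> = h (grid a b D (grid_cell a b D x))"
  proof -
    have "{1..D} \<inter> {i. i = grid_cell a b D x} = {grid_cell a b D x}"
      using grid_cell(1)[OF assms] by auto
    then show ?thesis by (simp only: sum_mult_of_bool_eq finite_atLeastAtMost) simp
  qed
  finally show ?thesis .
qed

lemma has_integral_right_endpoint_step: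
  assumes "a < b"
  shows "(right_endpoint_step a b D h has_integral (b - a) / real D * (\<Sum>i\<in>{1..D}. h (grid a b D i))) {a..b}"
proof -
  have "((\<lambda>x. h (grid a b D i) * indicator {grid a b D (i - 1)<..grid a b D i} x)
          has_integral h (grid a b D i) * ((b - a) / real D)) {a..b}" if i: "i \<in> {1..D}" for i
  proof -
    have lo: "a \<le> grid a b D (i - 1)" and hi: "grid a b D i \<le> b"
      using assms grid_in_Icc[of a b i D] i by (auto simp: grid_def)
    have len: "grid a b D i - grid a b D (i - 1) = (b - a) / real D"
      using i by (simp add: grid_diff of_nat_diff)
    moreover have "0 \<le> (b - a) / real D" using assms by simp
    ultimately have "grid a b D (i - 1) \<le> grid a b D i" by linarith
    then show ?thesis
      using has_integral_mult_right[OF has_integral_indicator_Ioc[OF lo _ hi], of "h (grid a b D i)"] len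
      by simp
  qed
  then have "(right_endpoint_step a b D h has_integral (\<Sum>i\<in>{1..D}. h (grid a b D i) * ((b - a) / real D))) {a..b}"
    unfolding right_endpoint_step_def by (rule has_integral_sum[OF finite_atLeastAtMost])
  then show ?thesis by (simp add: sum_distrib_left mult.commute)
qed

lemma abs_right_endpoint_step_le:
  assumes "a < b" "x \<in> {a<..b}" "\<And>y. y \<in> {a..b} \<Longrightarrow> \<bar>h y\<bar> \<le> B"
  shows "\<bar>right_endpoint_step a b D h x\<bar> \<le> B"
proof (cases "D = 0")
  case True
  then show ?thesis using assms(1) assms(3)[of a] by (simp add: right_endpoint_step_def)
next
  case False
  then have "D > 0" by simp
  have "grid a b D (grid_cell a b D x) \<in> {a..b}"
    using grid_in_Icc[OF _ grid_cell(1)[OF assms(1) \<open>D > 0\<close> assms(2)]] assms(1) by simp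
  then show ?thesis using assms(3) right_endpoint_step_eq[OF assms(1) \<open>D > 0\<close> assms(2)] by simp
qed

lemma right_endpoint_step_LIMSEQ:
  assumes "a < b" and d: "filterlim d at_top sequentially" and x: "x \<in> {a<..b}" "isCont h x"
  shows "(\<lambda>n. right_endpoint_step a b (d n) h x) \<longlonglongrightarrow> h x"
proof -
  define z where "z n = grid a b (d n) (grid_cell a b (d n) x)" for n
  have "(\<lambda>n. (b - a) / real (d n)) \<longlonglongrightarrow> 0"
    by (rule tendsto_divide_0[OF tendsto_const filterlim_at_top_imp_at_infinity
          [OF filterlim_compose[OF filterlim_real_sequentially d]]])
  moreover have "\<forall>\<^sub>F n in sequentially. norm (z n - x) \<le> (b - a) / real (d n)"
    using eventually_pos_of_filterlim_at_top[OF d]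
  proof eventually_elim
    case (elim n)
    show ?case using grid_cell_dist[OF \<open>a < b\<close> elim x(1)] by (simp add: z_def)
  qed
  ultimately have "(\<lambda>n. z n - x) \<longlonglongrightarrow> 0" by (rule Lim_null_comparison[rotated])
  then have "z \<longlonglongrightarrow> x" by (simp only: LIM_zero_iff)
  then have lim: "(\<lambda>n. h (z n)) \<longlonglongrightarrow> h x" by (rule isCont_tendsto_compose[OF x(2)])
  have ev: "\<forall>\<^sub>F n in sequentially. h (z n) = right_endpoint_step a b (d n) h x"
    using eventually_pos_of_filterlim_at_top[OF d]
  proof eventually_elim
    case (elim n)
    show ?case using right_endpoint_step_eq[OF \<open>a < b\<close> elim x(1)] by (simp add: z_def)
  qed
  show ?thesis using tendsto_cong[OF ev] lim by (rule iffD1)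
qed

theorem riemann_sum_LIMSEQ:
  fixes h :: "real \<Rightarrow> real"
  assumes ab: "a < b" and d: "filterlim d at_top sequentially"
    and bound: "\<And>x. x \<in> {a..b} \<Longrightarrow> \<bar>h x\<bar> \<le> B"
    and "negligible N" and cont: "\<And>x. x \<in> {a<..<b} - N \<Longrightarrow> isCont h x"
  shows "(\<lambda>n. 1 / real (d n) * (\<Sum>i\<in>{1..d n}. h (grid a b (d n) i)))
           \<longlonglongrightarrow> 1 / (b - a) * integral {a..b} h"
proof -
  define S where "S = {a<..<b} - N"
  have "negligible ({a..b} - S)"
    by (rule negligible_subset[of "{a, b} \<union> N"]) (use \<open>negligible N\<close> in \<open>auto simp: S_def\<close>)
  moreover have "S - {a..b} = {}" by (auto simp: S_def)
  ultimately have spike: "negligible ((S - {a..b}) \<union> ({a..b} - S))" by simp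
  have on_S: "g integrable_on S \<longleftrightarrow> g integrable_on {a..b}" "integral S g = integral {a..b} g"
    for g :: "real \<Rightarrow> real"
  proof -
    show "g integrable_on S \<longleftrightarrow> g integrable_on {a..b}" by (rule integrable_spike_set_eq[OF spike])
    show "integral S g = integral {a..b} g"
      by (rule integral_spike_set; rule negligible_subset[OF spike]) auto
  qed
  have "(\<lambda>n. integral S (right_endpoint_step a b (d n) h)) \<longlonglongrightarrow> integral S h"
  proof (rule dominated_convergence(2))
    show "right_endpoint_step a b (d n) h integrable_on S" for n
      using has_integral_right_endpoint_step[OF ab] on_S by blast
    show "(\<lambda>x. B) integrable_on S" using on_S integrable_const_ivl by blast
    show "norm (right_endpoint_step a b (d n) h x) \<le> B" if "x \<in> S" for n x
      using abs_right_endpoint_step_le[OF ab _ bound] that by (simp add: S_def)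
    show "(\<lambda>n. right_endpoint_step a b (d n) h x) \<longlonglongrightarrow> h x" if "x \<in> S" for x
      using right_endpoint_step_LIMSEQ[OF ab d _ cont] that by (simp add: S_def)
  qed
  then have "(\<lambda>n. integral {a..b} (right_endpoint_step a b (d n) h)) \<longlonglongrightarrow> integral {a..b} h"
    by (simp only: on_S)
  then have "(\<lambda>n. 1 / (b - a) * integral {a..b} (right_endpoint_step a b (d n) h))
      \<longlonglongrightarrow> 1 / (b - a) * integral {a..b} h"
    by (rule tendsto_mult_left)
  moreover have "1 / (b - a) * integral {a..b} (right_endpoint_step a b (d n) h)
      = 1 / real (d n) * (\<Sum>i\<in>{1..d n}. h (grid a b (d n) i))" for n
    using integral_unique[OF has_integral_right_endpoint_step[OF ab]] ab by simp
  ultimately show ?thesis by simp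
qed

section \<open>Comparing limit distributions\<close>

definition test_function :: "(real \<Rightarrow> real) \<Rightarrow> bool" where
  "test_function \<phi> \<longleftrightarrow> continuous_on UNIV \<phi> \<and> bounded {u. \<phi> u \<noteq> 0}"

definition sample_mean :: "(nat \<Rightarrow> nat) \<Rightarrow> (nat \<Rightarrow> nat \<Rightarrow> real) \<Rightarrow> nat \<Rightarrow> (real \<Rightarrow> real) \<Rightarrow> real" where
  "sample_mean d U n \<phi> = 1 / real (d n) * (\<Sum>j\<in>{1..d n}. \<phi> (U j n))"

definition plateau :: "real \<Rightarrow> real \<Rightarrow> real \<Rightarrow> real \<Rightarrow> real" where
  "plateau lo hi e u = max 0 (min 1 (min ((u - lo) / e) ((hi - u) / e)))"

lemma plateau_bounds: "0 \<le> plateau lo hi e u" "plateau lo hi e u \<le> 1"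
  unfolding plateau_def by simp_all

lemma plateau_eq_1:
  assumes "e > 0" "u \<in> {lo + e..hi - e}"
  shows "plateau lo hi e u = 1"
proof -
  have "1 \<le> (u - lo) / e" "1 \<le> (hi - u) / e" using assms by (simp_all add: field_simps)
  then show ?thesis by (simp add: plateau_def)
qed

lemma plateau_eq_0:
  assumes "e > 0" "u \<notin> {lo<..<hi}"
  shows "plateau lo hi e u = 0"
proof -
  have "(u - lo) / e \<le> 0 \<or> (hi - u) / e \<le> 0"
    using assms by (auto simp: divide_nonpos_pos)
  then have "min ((u - lo) / e) ((hi - u) / e) \<le> 0" by auto
  then show ?thesis by (simp add: plateau_def)
qed

lemma plateau_ge_half:
  assumes "e > 0" "\<bar>u - z\<bar> < e / 2"
  shows "1 / 2 \<le> plateau (z - e) (z + e) e u"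
proof -
  have "z - e / 2 < u" "u < z + e / 2" using assms(2) unfolding abs_less_iff by auto
  then have "1 / 2 \<le> (u - (z - e)) / e" "1 / 2 \<le> (z + e - u) / e"
    using assms(1) by (simp_all add: field_simps)
  then have "1 / 2 \<le> min 1 (min ((u - (z - e)) / e) ((z + e - u) / e))" by simp
  then show ?thesis unfolding plateau_def by (rule order.trans[OF _ max.cobounded2])
qed

lemma of_bool_le_plateau:
  assumes "e > 0" "lo + e \<le> u" "c \<le> hi - e"
  shows "of_bool (u \<le> c) \<le> plateau lo hi e u"
proof (cases "u \<le> c")
  case True
  then show ?thesis using assms plateau_eq_1[of e u lo hi] by simp
qed (simp add: plateau_bounds)

lemma plateau_add_plateau_le:
  assumes "e > 0" "mid \<le> hi" "hi \<le> s"
  shows "plateau lo mid e u + plateau mid hi e u \<le> of_bool (u \<le> s)"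
proof (cases "u \<le> mid")
  case True
  then have "plateau mid hi e u = 0" using assms(1) by (simp add: plateau_eq_0)
  moreover have "u \<le> s" using True assms(2,3) by linarith
  ultimately show ?thesis using plateau_bounds[of lo mid e u] by simp
next
  case False
  then have "plateau lo mid e u = 0" using assms(1) by (simp add: plateau_eq_0)
  moreover have "plateau mid hi e u = 0" if "s < u" using that assms False by (simp add: plateau_eq_0)
  ultimately show ?thesis using plateau_bounds[of mid hi e u] by (cases "u \<le> s") auto
qed

lemma test_function_plateau:
  assumes "e > 0"
  shows "test_function (plateau lo hi e)"
  unfolding test_function_def
proof
  show "continuous_on UNIV (plateau lo hi e)"
    unfolding plateau_def by (intro continuous_intros) (use assms in auto)
  have "{u. plateau lo hi e u \<noteq> 0} \<subseteq> {lo..hi}"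
  proof
    fix u assume "u \<in> {u. plateau lo hi e u \<noteq> 0}"
    then show "u \<in> {lo..hi}" using plateau_eq_0[OF assms, of u lo hi] by (cases "lo < u \<and> u < hi") auto
  qed
  then show "bounded {u. plateau lo hi e u \<noteq> 0}"
    by (rule bounded_subset[OF bounded_closed_interval])
qed

lemma real_card_eq_sum_of_bool:
  assumes "finite A"
  shows "real (card {j\<in>A. P j}) = (\<Sum>j\<in>A. of_bool (P j))"
proof -
  have "{j\<in>A. P j} = A \<inter> {j. P j}" by auto
  then show ?thesis using assms by simp
qed

text \<open>A tent in the imaginary direction turns a real test function into a complex one, to which
  \<open>has_asymptotic_distribution\<close> applies.\<close>

lemma test_function_complex_extension:
  assumes "test_function \<phi>"
  shows "continuous_on UNIV (\<lambda>z. complex_of_real (\<phi> (Re z) * max 0 (1 - \<bar>Im z\<bar>)))"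
    and "bounded {z. complex_of_real (\<phi> (Re z) * max 0 (1 - \<bar>Im z\<bar>)) \<noteq> 0}"
proof -
  have cont: "continuous_on UNIV \<phi>" and supp: "bounded {u. \<phi> u \<noteq> 0}"
    using assms by (auto simp: test_function_def)
  show "continuous_on UNIV (\<lambda>z. complex_of_real (\<phi> (Re z) * max 0 (1 - \<bar>Im z\<bar>)))"
    by (intro continuous_intros continuous_on_compose2[OF cont]) auto
  obtain R where R: "\<And>u. \<phi> u \<noteq> 0 \<Longrightarrow> \<bar>u\<bar> \<le> R"
    using supp unfolding bounded_iff by auto
  have "norm z \<le> R + 1" if "complex_of_real (\<phi> (Re z) * max 0 (1 - \<bar>Im z\<bar>)) \<noteq> 0" for z
  proof -
    have "\<phi> (Re z) \<noteq> 0" "\<bar>Im z\<bar> < 1" using that by (auto simp: max_def split: if_splits)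
    then show ?thesis using R cmod_le[of z] by fastforce
  qed
  then show "bounded {z. complex_of_real (\<phi> (Re z) * max 0 (1 - \<bar>Im z\<bar>)) \<noteq> 0}"
    unfolding bounded_iff by blast
qed

locale common_limit_distribution =
  fixes d :: "nat \<Rightarrow> nat" and U V :: "nat \<Rightarrow> nat \<Rightarrow> real"
    and L :: "(real \<Rightarrow> real) \<Rightarrow> real" and m M :: real
  assumes d_to_top: "filterlim d at_top sequentially"
    and m_less_M: "m < M"
    and U_range: "\<And>n j. j \<in> {1..d n} \<Longrightarrow> U j n \<in> {m..M}"
    and V_range: "\<And>n j. j \<in> {1..d n} \<Longrightarrow> V j n \<in> {m..M}"
    and U_mean: "\<And>\<phi>. test_function \<phi> \<Longrightarrow> (\<lambda>n. sample_mean d U n \<phi>) \<longlonglongrightarrow> L \<phi>"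
    and V_mean: "\<And>\<phi>. test_function \<phi> \<Longrightarrow> (\<lambda>n. sample_mean d V n \<phi>) \<longlonglongrightarrow> L \<phi>"
    and L_plateau_pos: "\<And>z e. z \<in> {m..M} \<Longrightarrow> e > 0 \<Longrightarrow> L (plateau (z - e) (z + e) e) > 0"
begin

text \<open>The plateau of height 1 below \<open>z - 2e\<close> and the bump around \<open>z\<close> have disjoint supports;
  the bump carries positive limit mass, which absorbs the difference of the two sample means.\<close>

lemma eventually_card_le_around:
  assumes "e > 0" "z \<in> {m..M}" "s \<le> z - 2 * e" "z + 2 * e \<le> s'"
  shows "\<forall>\<^sub>F n in sequentially. card {j\<in>{1..d n}. U j n \<le> s} \<le> card {j\<in>{1..d n}. V j n \<le> s'}"
proof -
  define \<phi> where "\<phi> = plateau (m - e) (z - e) e"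
  define \<psi> where "\<psi> = plateau (z - e) (z + e) e"
  have below: "of_bool (u \<le> s) \<le> \<phi> u" if "u \<in> {m..M}" for u
    unfolding \<phi>_def using that assms by (intro of_bool_le_plateau) auto
  have above: "\<phi> u + \<psi> u \<le> of_bool (u \<le> s')" for u
    unfolding \<phi>_def \<psi>_def using assms by (intro plateau_add_plateau_le) auto
  define c where "c = L \<psi>"
  have "c > 0" unfolding c_def \<psi>_def using L_plateau_pos assms by simp
  have \<phi>: "test_function \<phi>" and \<psi>: "test_function \<psi>"
    using test_function_plateau assms(1) by (simp_all add: \<phi>_def \<psi>_def)
  have "\<forall>\<^sub>F n in sequentially. \<bar>sample_mean d U n \<phi> - L \<phi>\<bar> < c / 3"
    using tendstoD[OF U_mean[OF \<phi>], of "c / 3"] \<open>c > 0\<close> by (simp add: dist_real_def)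
  moreover have "\<forall>\<^sub>F n in sequentially. \<bar>sample_mean d V n \<phi> - L \<phi>\<bar> < c / 3"
    using tendstoD[OF V_mean[OF \<phi>], of "c / 3"] \<open>c > 0\<close> by (simp add: dist_real_def)
  moreover have "\<forall>\<^sub>F n in sequentially. \<bar>sample_mean d V n \<psi> - c\<bar> < c / 3"
    using tendstoD[OF V_mean[OF \<psi>], of "c / 3"] \<open>c > 0\<close> by (simp add: dist_real_def c_def)
  ultimately show ?thesis
    using eventually_pos_of_filterlim_at_top[OF d_to_top]
  proof eventually_elim
    case (elim n)
    then have "sample_mean d U n \<phi> < sample_mean d V n \<phi> + sample_mean d V n \<psi>" by linarith
    then have "(\<Sum>j\<in>{1..d n}. \<phi> (U j n)) < (\<Sum>j\<in>{1..d n}. \<phi> (V j n) + \<psi> (V j n))"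
      using elim(4) by (simp add: sample_mean_def sum.distrib field_simps)
    moreover have "real (card {j\<in>{1..d n}. U j n \<le> s}) \<le> (\<Sum>j\<in>{1..d n}. \<phi> (U j n))"
      unfolding real_card_eq_sum_of_bool[OF finite_atLeastAtMost] by (intro sum_mono below U_range)
    moreover have "(\<Sum>j\<in>{1..d n}. \<phi> (V j n) + \<psi> (V j n)) \<le> real (card {j\<in>{1..d n}. V j n \<le> s'})"
      unfolding real_card_eq_sum_of_bool[OF finite_atLeastAtMost] by (intro sum_mono above)
    ultimately show ?case by simp
  qed
qed

lemma eventually_card_le:
  assumes "s < s'"
  shows "\<forall>\<^sub>F n in sequentially. card {j\<in>{1..d n}. U j n \<le> s} \<le> card {j\<in>{1..d n}. V j n \<le> s'}"
proof (cases "M \<le> s \<or> s' \<le> m")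
  case True
  have "card {j\<in>{1..d n}. U j n \<le> s} \<le> card {j\<in>{1..d n}. V j n \<le> s'}" for n
  proof (cases "M \<le> s")
    case True
    then have "{j\<in>{1..d n}. V j n \<le> s'} = {1..d n}" using V_range[of _ n] assms by fastforce
    moreover have "card {j\<in>{1..d n}. U j n \<le> s} \<le> card {1..d n}" by (rule card_mono) auto
    ultimately show ?thesis by simp
  next
    case False
    then have "{j\<in>{1..d n}. U j n \<le> s} = {}" using \<open>M \<le> s \<or> s' \<le> m\<close> U_range[of _ n] assms by fastforce
    then show ?thesis by (simp only: card.empty le0)
  qed
  then show ?thesis by simp
next
  case False
  define lo where "lo = max s m"
  define hi where "hi = min s' M"
  have "lo < hi" "s \<le> lo" "hi \<le> s'" "m \<le> lo" "hi \<le> M"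
    using False assms m_less_M by (auto simp: lo_def hi_def)
  then have "(hi - lo) / 4 > 0" "(lo + hi) / 2 \<in> {m..M}"
    "s \<le> (lo + hi) / 2 - 2 * ((hi - lo) / 4)" "(lo + hi) / 2 + 2 * ((hi - lo) / 4) \<le> s'"
    by (auto simp: field_simps)
  then show ?thesis by (rule eventually_card_le_around)
qed

lemma eventually_shift_dominated:
  assumes "\<delta> > 0"
  shows "\<forall>\<^sub>F n in sequentially. shift_dominated \<delta> (\<lambda>j. U j n) {1..d n} (\<lambda>j. V j n) {1..d n}"
proof -
  have "\<forall>\<^sub>F n in sequentially. \<forall>k\<in>{..nat \<lceil>2 * (M - m) / \<delta>\<rceil>}.
      card {j\<in>{1..d n}. U j n \<le> m + real k * \<delta> / 2}
        \<le> card {j\<in>{1..d n}. V j n \<le> m + real k * \<delta> / 2 + \<delta> / 2}"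
    using eventually_card_le assms by (intro eventually_ball_finite) auto
  then show ?thesis
  proof eventually_elim
    case (elim n)
    show ?case
      by (rule shift_dominated_of_mesh[where \<delta> = \<delta> and m = m and M = M])
        (use elim U_range V_range assms in auto)
  qed
qed

end

section \<open>The symbol\<close>

lemma integral_pos_if_ge_on_positive_measure:
  fixes g :: "real \<Rightarrow> real"
  assumes g: "g integrable_on {a..b}" and nonneg: "\<forall>x\<in>{a..b}. 0 \<le> g x"
    and A: "A \<subseteq> {a..b}" "A \<in> sets lebesgue" "emeasure lebesgue A > 0"
    and c: "c > 0" "\<forall>x\<in>A. c \<le> g x"
  shows "integral {a..b} g > 0"
proof -
  have Al: "A \<in> lmeasurable"
    using fmeasurableI2[OF lmeasurable_interval(1) _ A(2), of a b] A(1) by simp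
  have "measure lebesgue A > 0" using A(3) emeasure_eq_measure2[OF Al] by simp
  have one: "((\<lambda>x. 1) has_integral measure lebesgue A) A"
    using integrable_integral[OF lmeasurable_iff_integrable_on[THEN iffD1, OF Al]] lmeasure_integral[OF Al]
    by simp
  have "((\<lambda>x. c) has_integral c * measure lebesgue A) A"
    using has_integral_mult_right[OF one, of c] by simp
  then have step: "((\<lambda>x. if x \<in> A then c else 0) has_integral c * measure lebesgue A) {a..b}"
    by (simp only: has_integral_restrict[OF A(1)])
  have "c * measure lebesgue A \<le> integral {a..b} g"
    by (rule has_integral_le[OF step integrable_integral[OF g]]) (use nonneg c in auto)
  moreover have "c * measure lebesgue A > 0" using \<open>measure lebesgue A > 0\<close> c by simp
  ultimately show ?thesis by linarith
qed

locale regular_symbol =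
  fixes a b :: real and f :: "real \<Rightarrow> real"
  assumes ab: "a < b"
    and bdd: "bounded (f ` {a..b})"
    and fin_max: "finite {x. local_max_point a b f x}"
    and fin_min: "finite {x. local_min_point a b f x}"
    and fin_disc: "finite {x. discontinuity_point a b f x}"
    and ER: "essential_range a b f = {Inf (f ` {a..b}) .. Sup (f ` {a..b})}"
begin

definition critical_points :: "real set" where
  "critical_points = {x. local_max_point a b f x} \<union> {x. local_min_point a b f x} \<union>
     {x. discontinuity_point a b f x} \<union> {a, b}"

lemma finite_critical_points: "finite critical_points"
  unfolding critical_points_def using fin_max fin_min fin_disc by auto

lemma endpoints_critical: "a \<in> critical_points" "b \<in> critical_points"
  unfolding critical_points_def by auto

lemma continuous_within_off_critical:
  "x \<in> {a..b} \<Longrightarrow> x \<notin> critical_points \<Longrightarrow> continuous (at x within {a..b}) f"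
  unfolding critical_points_def discontinuity_point_def by auto

lemma isCont_off_critical:
  assumes "x \<in> {a..b}" "x \<notin> critical_points"
  shows "isCont f x"
proof -
  have "x \<noteq> a" "x \<noteq> b" using assms(2) endpoints_critical by auto
  then have "x \<in> interior {a..b}" using assms(1) by auto
  then show ?thesis
    using continuous_within_off_critical[OF assms] at_within_interior by metis
qed

lemma interior_max_critical:
  assumes "x1 < t" "t < x2" "{x1..x2} \<subseteq> {a..b}" "\<forall>y\<in>{x1..x2}. f y \<le> f t"
  shows "t \<in> critical_points"
proof -
  have "local_max_point a b f t"
    unfolding local_max_point_def
  proof (intro conjI exI[of _ "min (t - x1) (x2 - t)"] ballI impI)
    fix x assume "x \<in> {a..b}" "\<bar>x - t\<bar> < min (t - x1) (x2 - t)"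
    then have "x \<in> {x1..x2}" by (auto simp: abs_less_iff)
    then show "f x \<le> f t" using assms(4) by blast
  qed (use assms in auto)
  then show ?thesis unfolding critical_points_def by auto
qed

lemma interior_min_critical:
  assumes "x1 < t" "t < x2" "{x1..x2} \<subseteq> {a..b}" "\<forall>y\<in>{x1..x2}. f t \<le> f y"
  shows "t \<in> critical_points"
proof -
  have "local_min_point a b f t"
    unfolding local_min_point_def
  proof (intro conjI exI[of _ "min (t - x1) (x2 - t)"] ballI impI)
    fix x assume "x \<in> {a..b}" "\<bar>x - t\<bar> < min (t - x1) (x2 - t)"
    then have "x \<in> {x1..x2}" by (auto simp: abs_less_iff)
    then show "f t \<le> f x" using assms(4) by blast
  qed (use assms in auto)
  then show ?thesis unfolding critical_points_def by auto
qed

lemma continuous_on_critical_free: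
  assumes "{c..e} \<subseteq> {a..b}" "{c..e} \<inter> critical_points = {}"
  shows "continuous_on {c..e} f"
proof (intro continuous_at_imp_continuous_on ballI)
  fix x assume "x \<in> {c..e}"
  then have "x \<in> {a..b}" "x \<notin> critical_points" using assms by blast+
  then show "isCont f x" by (rule isCont_off_critical)
qed

text \<open>On an interval free of critical points, two equal values would force an interior
  extremum of \<open>f\<close> between them.\<close>

lemma inj_on_critical_free:
  assumes sub: "{c..e} \<subseteq> {a..b}" and free: "{c..e} \<inter> critical_points = {}"
  shows "inj_on f {c..e}"
proof -
  have False if x: "x1 \<in> {c..e}" "x2 \<in> {c..e}" "x1 < x2" "f x1 = f x2" for x1 x2
  proof -
    have "{x1..x2} \<subseteq> {c..e}" using x by auto
    then have sub': "{x1..x2} \<subseteq> {a..b}" and free': "\<And>t. t \<in> {x1..x2} \<Longrightarrow> t \<notin> critical_points"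
      using sub free by blast+
    have cont: "continuous_on {x1..x2} f"
      using continuous_on_critical_free[OF sub' ] free' by blast
    obtain z where z: "z \<in> {x1..x2}" "\<forall>y\<in>{x1..x2}. f y \<le> f z"
      using continuous_attains_sup[OF compact_Icc _ cont] x by auto
    obtain w where w: "w \<in> {x1..x2}" "\<forall>y\<in>{x1..x2}. f w \<le> f y"
      using continuous_attains_inf[OF compact_Icc _ cont] x by auto
    consider "f x1 < f z" | "f w < f x1" | "f z = f x1" "f w = f x1"
      using z w x by force
    then show False
    proof cases
      case 1
      then have "x1 < z" "z < x2" using z x by (auto simp: le_less)
      then show False using interior_max_critical[OF _ _ sub' z(2)] free' z(1) by blast
    next
      case 2
      then have "x1 < w" "w < x2" using w x by (auto simp: le_less)
      then show False using interior_min_critical[OF _ _ sub' w(2)] free' w(1) by blast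
    next
      case 3
      define t where "t = (x1 + x2) / 2"
      have "x1 < t" "t < x2" using x by (auto simp: t_def)
      moreover have "\<forall>y\<in>{x1..x2}. f y \<le> f t"
        using z(2) w(2) 3 \<open>x1 < t\<close> \<open>t < x2\<close> by (metis atLeastAtMost_iff less_imp_le order_antisym)
      ultimately show False using interior_max_critical[OF _ _ sub'] free' by auto
    qed
  qed
  then show ?thesis
    by (intro inj_onI) (metis linorder_neqE_linordered_idom)
qed

definition far_from_critical :: "real \<Rightarrow> real set" where
  "far_from_critical \<eta> = {y\<in>{a..b}. \<forall>p\<in>critical_points. \<eta> \<le> \<bar>y - p\<bar>}"

lemma compact_far_from_critical: "compact (far_from_critical \<eta>)"
proof -
  have "closed (\<Inter>p\<in>critical_points. {y. \<eta> \<le> \<bar>y - p\<bar>})"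
    by (intro closed_INT ballI closed_Collect_le continuous_intros)
  then have "compact ({a..b} \<inter> (\<Inter>p\<in>critical_points. {y. \<eta> \<le> \<bar>y - p\<bar>}))"
    by (intro compact_Int_closed) auto
  moreover have "far_from_critical \<eta> = {a..b} \<inter> (\<Inter>p\<in>critical_points. {y. \<eta> \<le> \<bar>y - p\<bar>})"
    by (auto simp: far_from_critical_def)
  ultimately show ?thesis by simp
qed

lemma segment_far_from_critical:
  assumes y: "y \<in> far_from_critical \<eta>" and e: "0 < e" "e < \<eta>"
  shows "{y - e..y + e} \<subseteq> {a<..<b}" "{y - e..y + e} \<inter> critical_points = {}"
    and "{y - e..y + e} \<subseteq> {a..b}"
proof -
  have "y \<in> {a..b}" and far: "\<And>p. p \<in> critical_points \<Longrightarrow> \<eta> \<le> \<bar>y - p\<bar>"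
    using y by (auto simp: far_from_critical_def)
  then have "\<eta> \<le> y - a" "\<eta> \<le> b - y"
    using far[OF endpoints_critical(1)] far[OF endpoints_critical(2)] by auto
  then show "{y - e..y + e} \<subseteq> {a<..<b}" "{y - e..y + e} \<subseteq> {a..b}" using e by auto
  have "t \<noteq> p" if t: "t \<in> {y - e..y + e}" and p: "p \<in> critical_points" for t p
  proof -
    have "\<bar>y - t\<bar> \<le> e" using t by (simp add: abs_le_iff)
    then show "t \<noteq> p" using far[OF p] e by auto
  qed
  then show "{y - e..y + e} \<inter> critical_points = {}" by blast
qed

lemma monotone_around_far:
  assumes "y \<in> far_from_critical \<eta>" "0 < e" "e < \<eta>"
  shows "(f (y - e) < f y \<and> f y < f (y + e)) \<or> (f (y + e) < f y \<and> f y < f (y - e))"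
proof -
  note free = segment_far_from_critical(3,2)[OF assms]
  show ?thesis
    using continuous_inj_imp_mono[OF _ _ continuous_on_critical_free[OF free] inj_on_critical_free[OF free]]
      assms(2) by simp
qed

definition opening_radius :: "real \<Rightarrow> real \<Rightarrow> real" where
  "opening_radius e y = min \<bar>f (y + e) - f y\<bar> \<bar>f (y - e) - f y\<bar>"

lemma opening_radius_pos:
  assumes "y \<in> far_from_critical \<eta>" "0 < e" "e < \<eta>"
  shows "0 < opening_radius e y"
proof -
  have "f (y + e) \<noteq> f y" "f (y - e) \<noteq> f y" using monotone_around_far[OF assms] by auto
  then show ?thesis by (simp add: opening_radius_def)
qed

lemma preimage_near:
  assumes y: "y \<in> far_from_critical \<eta>" and e: "0 < e" "e < \<eta>"
    and w: "\<bar>w - f y\<bar> \<le> opening_radius e y"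
  shows "\<exists>x\<in>{y - e..y + e}. f x = w"
proof -
  have cont: "continuous_on {y - e..y + e} f"
    by (rule continuous_on_critical_free[OF segment_far_from_critical(3,2)[OF y e]])
  have "y - e \<le> y + e" using e by simp
  show ?thesis
    using monotone_around_far[OF y e]
  proof
    assume "f (y - e) < f y \<and> f y < f (y + e)"
    then have "f (y - e) \<le> w" "w \<le> f (y + e)" using w by (auto simp: opening_radius_def)
    then obtain x where "y - e \<le> x" "x \<le> y + e" "f x = w"
      using IVT'[OF _ _ \<open>y - e \<le> y + e\<close> cont] by blast
    then show ?thesis by auto
  next
    assume "f (y + e) < f y \<and> f y < f (y - e)"
    then have "f (y + e) \<le> w" "w \<le> f (y - e)" using w by (auto simp: opening_radius_def)
    then obtain x where "y - e \<le> x" "x \<le> y + e" "f x = w"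
      using IVT2'[OF _ _ \<open>y - e \<le> y + e\<close> cont] by blast
    then show ?thesis by auto
  qed
qed

lemma continuous_on_opening_radius:
  assumes "0 < e" "e < \<eta>"
  shows "continuous_on (far_from_critical \<eta>) (opening_radius e)"
proof (intro continuous_at_imp_continuous_on ballI)
  fix y assume y: "y \<in> far_from_critical \<eta>"
  have "isCont f t" if "t \<in> {y - e..y + e}" for t
  proof -
    have "t \<in> {a..b}" "t \<notin> critical_points"
      using segment_far_from_critical[OF y assms] that by auto
    then show ?thesis by (rule isCont_off_critical)
  qed
  then have "isCont f y" "isCont f (y + e)" "isCont f (y - e)"
    using assms by auto
  then have "isCont (\<lambda>y. f (y + e)) y" "isCont (\<lambda>y. f (y - e)) y"
    using continuous_at_compose[of y "\<lambda>y. y + e" f] continuous_at_compose[of y "\<lambda>y. y - e" f]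
    by (simp_all add: o_def)
  then show "isCont (opening_radius e) y"
    unfolding opening_radius_def by (intro continuous_intros \<open>isCont f y\<close>)
qed

text \<open>Compactness of the points at distance \<open>\<ge> \<eta>\<close> from the critical points makes the
  radius of local surjectivity uniform.\<close>

lemma uniform_preimage_radius:
  assumes "0 < e" "e < \<eta>"
  obtains \<rho> where "\<rho> > 0"
    "\<And>y w. y \<in> far_from_critical \<eta> \<Longrightarrow> \<bar>w - f y\<bar> \<le> \<rho> \<Longrightarrow> \<exists>x\<in>{y - e..y + e}. f x = w"
proof (cases "far_from_critical \<eta> = {}")
  case True
  then show ?thesis using that[of 1] by auto
next
  case False
  obtain y0 where y0: "y0 \<in> far_from_critical \<eta>"
    and min: "\<And>y. y \<in> far_from_critical \<eta> \<Longrightarrow> opening_radius e y0 \<le> opening_radius e y"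
    using continuous_attains_inf[OF compact_far_from_critical False continuous_on_opening_radius[OF assms]]
    by auto
  show ?thesis
  proof (rule that)
    show "opening_radius e y0 > 0" by (rule opening_radius_pos[OF y0 assms])
    fix y w assume "y \<in> far_from_critical \<eta>" "\<bar>w - f y\<bar> \<le> opening_radius e y0"
    then show "\<exists>x\<in>{y - e..y + e}. f x = w"
      using preimage_near[OF _ assms] min by (meson order_trans)
  qed
qed

definition m :: real where "m = Inf (f ` {a..b})"
definition M :: real where "M = Sup (f ` {a..b})"

lemma f_in_range: "x \<in> {a..b} \<Longrightarrow> f x \<in> {m..M}"
  using bounded_imp_bdd_below[OF bdd] bounded_imp_bdd_above[OF bdd]
  unfolding m_def M_def by (auto intro: cInf_lower cSup_upper)

text \<open>A constant \<open>f\<close> would make every point of \<open>[a, b]\<close> a local maximum.\<close>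

lemma m_less_M: "m < M"
proof (rule ccontr)
  assume "\<not> m < M"
  then have const: "f x = f a" if "x \<in> {a..b}" for x
    using f_in_range[OF that] f_in_range[of a] ab by auto
  have "local_max_point a b f x" if x: "x \<in> {a..b}" for x
    unfolding local_max_point_def
  proof (intro conjI exI[of _ 1] ballI impI)
    fix y assume "y \<in> {a..b}"
    then show "f y \<le> f x" using const[OF x] const[of y] by simp
  qed (use x in auto)
  then have "{a..b} \<subseteq> {x. local_max_point a b f x}" by blast
  then show False using fin_max infinite_Icc[OF ab] finite_subset by blast
qed

lemma bounded_comp:
  fixes \<phi> :: "real \<Rightarrow> real"
  assumes "continuous_on UNIV \<phi>"
  obtains B where "\<And>x. x \<in> {a..b} \<Longrightarrow> \<bar>\<phi> (f x)\<bar> \<le> B"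
proof -
  have "compact (\<phi> ` {m..M})"
    by (rule compact_continuous_image[OF continuous_on_subset[OF assms] compact_Icc]) simp
  then obtain B where B: "\<And>u. u \<in> \<phi> ` {m..M} \<Longrightarrow> norm u \<le> B"
    using compact_imp_bounded bounded_iff by metis
  show ?thesis
  proof (rule that)
    fix x assume "x \<in> {a..b}"
    then have "\<phi> (f x) \<in> \<phi> ` {m..M}" using f_in_range by blast
    then show "\<bar>\<phi> (f x)\<bar> \<le> B" using B by fastforce
  qed
qed

lemma integrable_comp:
  fixes \<phi> :: "real \<Rightarrow> real"
  assumes \<phi>: "continuous_on UNIV \<phi>"
  shows "(\<lambda>x. \<phi> (f x)) integrable_on {a..b}"
proof -
  define S where "S = {a..b} - critical_points"
  have "critical_points \<in> lmeasurable"
    using finite_critical_points by (intro lmeasurable_compact finite_imp_compact)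
  then have S: "S \<in> sets lebesgue"
    unfolding S_def by (intro fmeasurableD fmeasurable_Diff) auto
  have "continuous_on S f"
    unfolding continuous_on_eq_continuous_within
  proof
    fix x assume "x \<in> S"
    then have "continuous (at x within {a..b}) f"
      using continuous_within_off_critical unfolding S_def by blast
    then show "continuous (at x within S) f"
      by (rule continuous_within_subset) (simp add: S_def)
  qed
  then have "continuous_on S (\<lambda>x. \<phi> (f x))"
    by (rule continuous_on_compose2[OF \<phi>]) simp
  then have meas: "(\<lambda>x. \<phi> (f x)) \<in> borel_measurable (lebesgue_on S)"
    by (rule continuous_imp_measurable_on_sets_lebesgue[OF _ S])
  obtain B where B: "\<And>x. x \<in> {a..b} \<Longrightarrow> \<bar>\<phi> (f x)\<bar> \<le> B" using bounded_comp[OF \<phi>] by blast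
  have spike: "negligible ((S - {a..b}) \<union> ({a..b} - S))"
    by (rule negligible_subset[OF negligible_finite[OF finite_critical_points]]) (auto simp: S_def)
  then have "(\<lambda>x. B) integrable_on S"
    using integrable_spike_set_eq[OF spike] integrable_const_ivl by blast
  then have "(\<lambda>x. \<phi> (f x)) integrable_on S"
    by (rule measurable_bounded_by_integrable_imp_integrable_real[OF meas _ _ S]) (use B in \<open>auto simp: S_def\<close>)
  then show ?thesis using integrable_spike_set_eq[OF spike] by blast
qed

lemma integral_plateau_pos:
  assumes "z \<in> {m..M}" "e > 0"
  shows "integral {a..b} (\<lambda>x. plateau (z - e) (z + e) e (f x)) > 0"
proof -
  define A where "A = {x\<in>{a..b}. \<bar>f x - z\<bar> < e / 2}"
  have "z \<in> essential_range a b f" using assms(1) ER by (simp add: m_def M_def)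
  then have "\<forall>\<epsilon>>0. emeasure lebesgue {x\<in>{a..b}. \<bar>f x - z\<bar> < \<epsilon>} > 0"
    unfolding essential_range_def by blast
  then have pos: "emeasure lebesgue A > 0" unfolding A_def using assms(2) half_gt_zero by blast
  then have "A \<in> sets lebesgue" using emeasure_notin_sets by fastforce
  moreover have "(\<lambda>x. plateau (z - e) (z + e) e (f x)) integrable_on {a..b}"
    using test_function_plateau[OF assms(2)] by (intro integrable_comp) (simp add: test_function_def)
  moreover have "\<forall>x\<in>A. 1 / 2 \<le> plateau (z - e) (z + e) e (f x)"
    using plateau_ge_half[OF assms(2)] by (simp add: A_def)
  moreover have "A \<subseteq> {a..b}" by (auto simp: A_def)
  ultimately show ?thesis
    using integral_pos_if_ge_on_positive_measure[of "\<lambda>x. plateau (z - e) (z + e) e (f x)" a b A "1 / 2"]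
      pos plateau_bounds by simp
qed

definition symbol_mean :: "(real \<Rightarrow> real) \<Rightarrow> real" where
  "symbol_mean \<phi> = 1 / (b - a) * integral {a..b} (\<lambda>x. \<phi> (f x))"

lemma symbol_mean_plateau_pos:
  "z \<in> {m..M} \<Longrightarrow> e > 0 \<Longrightarrow> symbol_mean (plateau (z - e) (z + e) e) > 0"
  using integral_plateau_pos ab by (simp add: symbol_mean_def)

lemma grid_sample_mean_LIMSEQ:
  assumes d: "filterlim d at_top sequentially" and "test_function \<phi>"
  shows "(\<lambda>n. sample_mean d (\<lambda>i n. f (grid a b (d n) i)) n \<phi>) \<longlonglongrightarrow> symbol_mean \<phi>"
proof -
  have \<phi>: "continuous_on UNIV \<phi>" using assms(2) by (simp add: test_function_def)
  obtain B where "\<And>x. x \<in> {a..b} \<Longrightarrow> \<bar>\<phi> (f x)\<bar> \<le> B" using bounded_comp[OF \<phi>] by blast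
  moreover have "isCont (\<lambda>x. \<phi> (f x)) x" if "x \<in> {a<..<b} - critical_points" for x
  proof -
    have "isCont f x" using that by (intro isCont_off_critical) auto
    moreover have "isCont \<phi> (f x)" using \<phi> by (simp add: continuous_on_eq_continuous_at)
    ultimately show ?thesis using continuous_at_compose[of x f \<phi>] by (simp add: o_def)
  qed
  ultimately show ?thesis
    unfolding sample_mean_def symbol_mean_def
    by (rule riemann_sum_LIMSEQ[OF ab d _ negligible_finite[OF finite_critical_points]]) auto
qed

lemma card_not_far_le:
  assumes "D > 0" "0 \<le> \<eta>"
  shows "real (card ({1..D} \<inter> {i. grid a b D i \<notin> far_from_critical \<eta>}))
           \<le> real (card critical_points) * (2 * \<eta> * real D / (b - a) + 1)"
proof -
  have "{1..D} \<inter> {i. grid a b D i \<notin> far_from_critical \<eta>}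
      \<subseteq> {i\<in>{1..D}. \<exists>p\<in>critical_points. \<bar>grid a b D i - p\<bar> < \<eta>}"
  proof
    fix i assume i: "i \<in> {1..D} \<inter> {i. grid a b D i \<notin> far_from_critical \<eta>}"
    then have "grid a b D i \<in> {a..b}" using grid_in_Icc[of a b i D] ab by auto
    then show "i \<in> {i\<in>{1..D}. \<exists>p\<in>critical_points. \<bar>grid a b D i - p\<bar> < \<eta>}"
      using i by (auto simp: far_from_critical_def not_le)
  qed
  then have "card ({1..D} \<inter> {i. grid a b D i \<notin> far_from_critical \<eta>})
      \<le> card {i\<in>{1..D}. \<exists>p\<in>critical_points. \<bar>grid a b D i - p\<bar> < \<eta>}"
    by (rule card_mono[rotated]) auto
  then show ?thesis
    using card_grid_near_set_le[OF ab assms finite_critical_points] by linarith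
qed

lemma card_not_far_small:
  assumes "D > 0" "0 \<le> \<eta>" and \<eta>: "8 * (real (card critical_points) + 1) * \<eta> \<le> \<epsilon>"
    and D: "4 * (real (card critical_points) + 1) * (b - a) \<le> \<epsilon> * real D"
  shows "real (card ({1..D} \<inter> {i. grid a b D i \<notin> far_from_critical \<eta>})) + 1
           \<le> \<epsilon> / 2 * real D / (b - a)"
proof -
  define c where "c = real (card critical_points)"
  define q where "q = real D / (b - a)"
  have "0 \<le> c" "0 \<le> q" using ab by (simp_all add: c_def q_def)
  have "c + 1 \<le> \<epsilon> / 4 * q"
    using D ab by (simp add: c_def q_def field_simps)
  moreover have "c * (2 * \<eta> * real D / (b - a)) = c * (2 * \<eta>) * q"
    by (simp add: q_def)
  moreover have "c * (2 * \<eta>) \<le> \<epsilon> / 4"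
    using \<eta> \<open>0 \<le> c\<close> \<open>0 \<le> \<eta>\<close> by (simp add: c_def algebra_simps)
  then have "c * (2 * \<eta>) * q \<le> \<epsilon> / 4 * q"
    using \<open>0 \<le> q\<close> by (rule mult_right_mono)
  moreover have "real (card ({1..D} \<inter> {i. grid a b D i \<notin> far_from_critical \<eta>}))
      \<le> c * (2 * \<eta> * real D / (b - a) + 1)"
    using card_not_far_le[OF assms(1,2)] by (simp add: c_def)
  moreover have "c * (2 * \<eta> * real D / (b - a) + 1) = c * (2 * \<eta> * real D / (b - a)) + c"
    by (simp add: distrib_left)
  moreover have "\<epsilon> / 2 * real D / (b - a) = \<epsilon> / 2 * q" by (simp add: q_def)
  moreover have "\<epsilon> / 2 * q = \<epsilon> / 4 * q + \<epsilon> / 4 * q" by (simp add: field_simps)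
  ultimately show ?thesis by linarith
qed

end

locale distributed_symbol = regular_symbol a b f for a b f +
  fixes d :: "nat \<Rightarrow> nat" and lam :: "nat \<Rightarrow> nat \<Rightarrow> real"
  assumes d_inf: "filterlim d at_top sequentially"
    and distr: "has_asymptotic_distribution d lam a b f"
    and range: "\<forall>n. \<forall>i\<in>{1..d n}. lam i n \<in> f ` {a..b}"
begin

lemma lam_sample_mean_LIMSEQ:
  assumes "test_function \<phi>"
  shows "(\<lambda>n. sample_mean d lam n \<phi>) \<longlonglongrightarrow> symbol_mean \<phi>"
proof -
  define F where "F z = complex_of_real (\<phi> (Re z) * max 0 (1 - \<bar>Im z\<bar>))" for z
  have F_real: "F (complex_of_real u) = complex_of_real (\<phi> u)" for u
    by (simp add: F_def)
  have "(\<lambda>n. 1 / of_nat (d n) * (\<Sum>i=1..d n. F (complex_of_real (lam i n))))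
      \<longlonglongrightarrow> 1 / complex_of_real (b - a) * integral {a..b} (\<lambda>x. F (complex_of_real (f x)))"
    using distr test_function_complex_extension[OF assms]
    unfolding has_asymptotic_distribution_def F_def by blast
  moreover have "integral {a..b} (\<lambda>x. F (complex_of_real (f x)))
      = complex_of_real (integral {a..b} (\<lambda>x. \<phi> (f x)))"
    using assms unfolding F_real test_function_def
    by (intro integral_unique has_integral_of_real integrable_integral integrable_comp) simp
  ultimately have "(\<lambda>n. complex_of_real (sample_mean d lam n \<phi>)) \<longlonglongrightarrow> complex_of_real (symbol_mean \<phi>)"
    by (simp add: F_real sample_mean_def symbol_mean_def)
  then show ?thesis by (simp only: tendsto_of_real_iff)
qed

lemma lam_in_range:
  assumes "i \<in> {1..d n}"
  shows "lam i n \<in> {m..M}"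
proof -
  obtain x where "x \<in> {a..b}" "lam i n = f x" using range assms by blast
  then show ?thesis using f_in_range by simp
qed

lemma eventually_value_matching:
  assumes "\<rho> > 0"
  shows "\<forall>\<^sub>F n in sequentially. \<exists>\<sigma>. \<sigma> permutes {1..d n} \<and>
           (\<forall>i\<in>{1..d n}. \<bar>lam (\<sigma> i) n - f (grid a b (d n) i)\<bar> \<le> \<rho>)"
proof -
  define G where "G i n = f (grid a b (d n) i)" for i n
  have G_range: "G i n \<in> {m..M}" if "i \<in> {1..d n}" for i n
    unfolding G_def using f_in_range grid_in_Icc ab that by simp
  have G_mean: "(\<lambda>n. sample_mean d G n \<phi>) \<longlonglongrightarrow> symbol_mean \<phi>" if "test_function \<phi>" for \<phi>
    unfolding G_def using grid_sample_mean_LIMSEQ[OF d_inf that] .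
  interpret lam_grid: common_limit_distribution d lam G symbol_mean m M
    by unfold_locales
      (use d_inf m_less_M lam_in_range G_range lam_sample_mean_LIMSEQ G_mean symbol_mean_plateau_pos in auto)
  interpret grid_lam: common_limit_distribution d G lam symbol_mean m M
    by unfold_locales
      (use d_inf m_less_M lam_in_range G_range lam_sample_mean_LIMSEQ G_mean symbol_mean_plateau_pos in auto)
  show ?thesis
    using lam_grid.eventually_shift_dominated[OF assms] grid_lam.eventually_shift_dominated[OF assms]
  proof eventually_elim
    case (elim n)
    then show ?case
      using shift_dominated_imp_close_permutation[OF finite_atLeastAtMost] by (simp add: G_def)
  qed
qed

definition rearranged_preimages :: "nat \<Rightarrow> (nat \<Rightarrow> real) \<Rightarrow> bool" where
  "rearranged_preimages n x \<longleftrightarrow> (\<forall>i\<in>{1..d n}. x i \<in> {a..b}) \<and>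
     (\<exists>\<tau>. \<tau> permutes {1..d n} \<and> (\<forall>i\<in>{1..d n}. lam (\<tau> i) n = f (x i)))"

lemma exists_rearranged_preimages: "\<exists>x. rearranged_preimages n x"
proof -
  have "\<forall>i\<in>{1..d n}. \<exists>x. x \<in> {a..b} \<and> f x = lam i n" using range by fastforce
  then obtain x where "\<forall>i\<in>{1..d n}. x i \<in> {a..b} \<and> f (x i) = lam i n" by metis
  then have "rearranged_preimages n x"
    unfolding rearranged_preimages_def by (intro conjI ballI exI[of _ id]) (auto simp: permutes_id)
  then show ?thesis by blast
qed

lemma exists_preimages_near_grid:
  assumes e: "0 < e" "e < \<eta>"
    and preimage: "\<And>y w. y \<in> far_from_critical \<eta> \<Longrightarrow> \<bar>w - f y\<bar> \<le> \<rho> \<Longrightarrow> \<exists>x\<in>{y - e..y + e}. f x = w"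
    and \<sigma>: "\<sigma> permutes {1..d n}" "\<forall>i\<in>{1..d n}. \<bar>lam (\<sigma> i) n - f (grid a b (d n) i)\<bar> \<le> \<rho>"
  shows "\<exists>\<xi>. \<forall>i\<in>{1..d n}. \<xi> i \<in> {a..b} \<and> f (\<xi> i) = lam (\<sigma> i) n \<and>
           (grid a b (d n) i \<in> far_from_critical \<eta> \<longrightarrow> \<bar>\<xi> i - grid a b (d n) i\<bar> \<le> e)"
proof -
  have "\<exists>\<xi>. \<xi> \<in> {a..b} \<and> f \<xi> = lam (\<sigma> i) n \<and>
      (grid a b (d n) i \<in> far_from_critical \<eta> \<longrightarrow> \<bar>\<xi> - grid a b (d n) i\<bar> \<le> e)"
    if i: "i \<in> {1..d n}" for i
  proof (cases "grid a b (d n) i \<in> far_from_critical \<eta>")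
    case False
    have "\<sigma> i \<in> {1..d n}" using permutes_in_image[OF \<sigma>(1)] i by simp
    then show ?thesis using range False by fastforce
  next
    case True
    then obtain \<xi> where "\<xi> \<in> {grid a b (d n) i - e..grid a b (d n) i + e}" "f \<xi> = lam (\<sigma> i) n"
      using preimage \<sigma>(2) i by (fastforce simp: abs_minus_commute)
    moreover note segment_far_from_critical(3)[OF True e]
    ultimately have "\<xi> \<in> {a..b}" "\<bar>\<xi> - grid a b (d n) i\<bar> \<le> e" by (auto simp: abs_le_iff)
    then show ?thesis using \<open>f \<xi> = lam (\<sigma> i) n\<close> by blast
  qed
  then show ?thesis by (intro bchoice ballI)
qed

text \<open>The few grid points near critical points, where no nearby preimage need exist, are
  absorbed by a second sorted matching, of the preimages against the grid.\<close>

lemma rearranged_preimages_near_grid: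
  assumes "d n > 0" "\<epsilon> > 0" "e \<le> \<epsilon> / 2"
    and \<xi>: "\<forall>i\<in>{1..d n}. \<xi> i \<in> {a..b} \<and> f (\<xi> i) = lam (\<sigma> i) n \<and>
      (grid a b (d n) i \<in> far_from_critical \<eta> \<longrightarrow> \<bar>\<xi> i - grid a b (d n) i\<bar> \<le> e)"
    and \<sigma>: "\<sigma> permutes {1..d n}"
    and few: "real (card ({1..d n} \<inter> {i. grid a b (d n) i \<notin> far_from_critical \<eta>})) + 1
                \<le> \<epsilon> / 2 * real (d n) / (b - a)"
  shows "\<exists>x. rearranged_preimages n x \<and> grid_deviation a b (d n) x \<le> \<epsilon>"
proof -
  have "\<forall>i\<in>{1..d n}. \<xi> i \<in> {a..b}" using \<xi> by blast
  moreover have "\<forall>i\<in>{1..d n} - {i. grid a b (d n) i \<notin> far_from_critical \<eta>}.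
      \<bar>\<xi> i - grid a b (d n) i\<bar> \<le> \<epsilon> / 2"
    using \<xi> assms(3) by force
  ultimately obtain \<tau> where \<tau>: "\<tau> permutes {1..d n}" "\<forall>i\<in>{1..d n}. \<bar>\<xi> (\<tau> i) - grid a b (d n) i\<bar> \<le> \<epsilon>"
    using exists_permutation_close_to_grid[OF ab assms(1,2) _ _ few] by blast
  have "rearranged_preimages n (\<xi> \<circ> \<tau>)"
    unfolding rearranged_preimages_def
  proof (intro conjI ballI exI[of _ "\<sigma> \<circ> \<tau>"])
    show "\<sigma> \<circ> \<tau> permutes {1..d n}" by (rule permutes_compose[OF \<tau>(1) \<sigma>])
    fix i assume "i \<in> {1..d n}"
    then have "\<tau> i \<in> {1..d n}" using permutes_in_image[OF \<tau>(1)] by simp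
    then show "(\<xi> \<circ> \<tau>) i \<in> {a..b}" "lam ((\<sigma> \<circ> \<tau>) i) n = f ((\<xi> \<circ> \<tau>) i)" using \<xi> by auto
  qed
  moreover have "grid_deviation a b (d n) (\<xi> \<circ> \<tau>) \<le> \<epsilon>"
    using \<tau>(2) \<open>\<epsilon> > 0\<close> by (simp add: grid_deviation_le_iff)
  ultimately show ?thesis by blast
qed

lemma eventually_rearranged_preimages_near_grid:
  assumes "\<epsilon> > 0"
  shows "\<forall>\<^sub>F n in sequentially. \<exists>x. rearranged_preimages n x \<and> grid_deviation a b (d n) x \<le> \<epsilon>"
proof -
  define c where "c = real (card critical_points)"
  define \<eta> where "\<eta> = \<epsilon> / (8 * (c + 1))"
  have "0 \<le> c" by (simp add: c_def)
  then have "0 < \<eta>" "\<eta> \<le> \<epsilon>" "8 * (c + 1) * \<eta> \<le> \<epsilon>"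
    using assms by (simp_all add: \<eta>_def field_simps)
  then have e: "0 < \<eta> / 2" "\<eta> / 2 < \<eta>" "\<eta> / 2 \<le> \<epsilon> / 2" by simp_all
  obtain \<rho> where "\<rho> > 0" and preimage:
      "\<And>y w. y \<in> far_from_critical \<eta> \<Longrightarrow> \<bar>w - f y\<bar> \<le> \<rho> \<Longrightarrow> \<exists>x\<in>{y - \<eta> / 2..y + \<eta> / 2}. f x = w"
    using uniform_preimage_radius[OF e(1,2)] by blast
  have "filterlim (\<lambda>n. real (d n)) at_top sequentially"
    by (rule filterlim_compose[OF filterlim_real_sequentially d_inf])
  then have "\<forall>\<^sub>F n in sequentially. 4 * (c + 1) * (b - a) / \<epsilon> \<le> real (d n)"
    by (simp add: filterlim_at_top)
  then show ?thesis
    using eventually_value_matching[OF \<open>\<rho> > 0\<close>]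
  proof eventually_elim
    case (elim n)
    then obtain \<sigma> where \<sigma>: "\<sigma> permutes {1..d n}"
      "\<forall>i\<in>{1..d n}. \<bar>lam (\<sigma> i) n - f (grid a b (d n) i)\<bar> \<le> \<rho>" by blast
    have "0 < 4 * (c + 1) * (b - a) / \<epsilon>" using \<open>0 \<le> c\<close> ab assms by simp
    then have "d n > 0" using elim(1) by linarith
    have "4 * (c + 1) * (b - a) \<le> \<epsilon> * real (d n)"
      using elim(1) assms by (simp add: field_simps)
    then have few: "real (card ({1..d n} \<inter> {i. grid a b (d n) i \<notin> far_from_critical \<eta>})) + 1
        \<le> \<epsilon> / 2 * real (d n) / (b - a)"
      using card_not_far_small[OF \<open>d n > 0\<close>] \<open>0 < \<eta>\<close> \<open>8 * (c + 1) * \<eta> \<le> \<epsilon>\<close> by (simp add: c_def)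
    obtain \<xi> where "\<forall>i\<in>{1..d n}. \<xi> i \<in> {a..b} \<and> f (\<xi> i) = lam (\<sigma> i) n \<and>
        (grid a b (d n) i \<in> far_from_critical \<eta> \<longrightarrow> \<bar>\<xi> i - grid a b (d n) i\<bar> \<le> \<eta> / 2)"
      using exists_preimages_near_grid[OF e(1,2) preimage \<sigma>] by blast
    then show ?case
      using rearranged_preimages_near_grid[OF \<open>d n > 0\<close> assms e(3) _ \<sigma>(1) few] by blast
  qed
qed

end

lemma diagonal_choice_LIMSEQ_0:
  fixes g :: "nat \<Rightarrow> 'a \<Rightarrow> real"
  assumes ex: "\<And>n. \<exists>x. Q n x" and nonneg: "\<And>n x. 0 \<le> g n x"
    and small: "\<And>\<epsilon>. \<epsilon> > 0 \<Longrightarrow> \<forall>\<^sub>F n in sequentially. \<exists>x. Q n x \<and> g n x \<le> \<epsilon>"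
  shows "\<exists>X. (\<forall>n. Q n (X n)) \<and> (\<lambda>n. g n (X n)) \<longlonglongrightarrow> 0"
proof -
  define e where "e n = Inf (g n ` Collect (Q n))" for n
  have bdd: "bdd_below (g n ` Collect (Q n))" for n
    using nonneg by (auto intro!: bdd_belowI[where m = 0])
  have e_le: "e n \<le> g n x" if "Q n x" for n x
    unfolding e_def using that bdd by (auto intro: cInf_lower)
  have "\<exists>x. Q n x \<and> g n x < e n + 1 / Suc n" for n
  proof -
    have "g n ` Collect (Q n) \<noteq> {}" using ex[of n] by auto
    moreover have "Inf (g n ` Collect (Q n)) < e n + 1 / Suc n" by (simp add: e_def)
    ultimately obtain y where "y \<in> g n ` Collect (Q n)" "y < e n + 1 / Suc n"
      using cInf_less_iff[OF _ bdd[of n]] by blast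
    then show ?thesis by auto
  qed
  then obtain X where X: "\<And>n. Q n (X n)" "\<And>n. g n (X n) < e n + 1 / Suc n" by metis
  have "(\<lambda>n. g n (X n)) \<longlonglongrightarrow> 0"
  proof (rule tendstoI)
    fix r :: real assume "r > 0"
    have "\<forall>\<^sub>F n in sequentially. \<exists>x. Q n x \<and> g n x \<le> r / 2"
      using small[of "r / 2"] \<open>r > 0\<close> by simp
    then have "\<forall>\<^sub>F n in sequentially. e n \<le> r / 2"
    proof eventually_elim
      case (elim n)
      then obtain x where "Q n x" "g n x \<le> r / 2" by blast
      then show ?case using e_le[of n x] by simp
    qed
    moreover have "\<forall>\<^sub>F n in sequentially. 1 / real (Suc n) < r / 2"
      using order_tendstoD(2)[OF LIMSEQ_inverse_real_of_nat, of "r / 2"] \<open>r > 0\<close>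
      by (simp add: inverse_eq_divide)
    ultimately show "\<forall>\<^sub>F n in sequentially. dist (g n (X n)) 0 < r"
    proof eventually_elim
      case (elim n)
      have "dist (g n (X n)) 0 = g n (X n)" using nonneg[of n "X n"] by simp
      then show ?case using elim X(2)[of n] by simp
    qed
  qed
  then show ?thesis using X(1) by blast
qed

theorem theorem2p6:
  fixes a b :: real and f :: "real \<Rightarrow> real"
    and d :: "nat \<Rightarrow> nat" and lam :: "nat \<Rightarrow> nat \<Rightarrow> real"
  assumes ab: "a < b"
    and bdd: "bounded (f ` {a..b})"
    and fin_max: "finite {x. local_max_point a b f x}"
    and fin_min: "finite {x. local_min_point a b f x}"
    and fin_disc: "finite {x. discontinuity_point a b f x}"
    and ER: "essential_range a b f = {Inf (f ` {a..b}) .. Sup (f ` {a..b})}"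
    and d_inf: "filterlim d at_top sequentially"
    and distr: "has_asymptotic_distribution d lam a b f"
    and range: "\<forall>n. \<forall>i\<in>{1..d n}. lam i n \<in> f ` {a..b}"
  shows "\<exists>x :: nat \<Rightarrow> nat \<Rightarrow> real.
           asymptotically_uniform_grid d x a b \<and>
           (\<forall>n. \<forall>i\<in>{1..d n}. x i n \<in> {a..b}) \<and>
           (\<forall>n. \<exists>\<tau>. \<tau> permutes {1..d n} \<and> (\<forall>i\<in>{1..d n}. lam (\<tau> i) n = f (x i n)))"
proof -
  interpret distributed_symbol a b f d lam
    by unfold_locales (fact ab bdd fin_max fin_min fin_disc ER d_inf distr range)+
  obtain X where X: "\<And>n. rearranged_preimages n (X n)"
    and lim: "(\<lambda>n. grid_deviation a b (d n) (X n)) \<longlonglongrightarrow> 0"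
    using diagonal_choice_LIMSEQ_0[of rearranged_preimages "\<lambda>n. grid_deviation a b (d n)"]
      exists_rearranged_preimages grid_deviation_nonneg eventually_rearranged_preimages_near_grid
    by blast
  have "asymptotically_uniform_grid d (\<lambda>i n. X n i) a b"
    using asymptotically_uniform_gridI[OF d_inf] lim by simp
  then show ?thesis
    using X unfolding rearranged_preimages_def by blast
qed

end
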